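(* Let $\mu\in\mathbb{R}^p$ be deterministic, $l=(l_1,\dots,l_n)\in\{-1,1\}^n$, and $\sigma_1,\dots,\sigma_p\ge 0$. Observe $Y_j=l_j\mu+\varepsilon_j$, $j=1,\dots,n$, where $\varepsilon_j=(\varepsilon_{1j},\dots,\varepsilon_{pj})^\top$ and all $\varepsilon_{ij}\sim N(0,\sigma_i^2)$ are independent. Let $Y\in\mathbb{R}^{n\times p}$ be the matrix with rows $Y_1^\top,\dots,Y_n^\top$, let $\hat v$ be a unit-norm leading eigenvector of $YY^\top$, and set $\hat l_j=\mathrm{sgn}(\hat v_j)$, $j=1,\dots,n$. Let $\sigma_*=\max_i\sigma_i$ and $\tilde\sigma=(\sum_i\sigma_i^4)^{1/4}$. Then there is a universal constant $C>0$ such that \[ \mathbb{E}\,\mathcal{M}(l,\hat l)\le C\left(\frac{n\|\mu\|_2\sigma_*+n\sigma_*^2+\sqrt n\,\tilde\sigma^2}{n\|\mu\|_2^2}\wedge 1\right). \]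
   Context: The misclassification rate is $\mathcal{M}(l,\hat l)=\frac1n\min\{\sum_{i=1}^n 1_{\{l_i\ne\hat l_i\}},\ \sum_{i=1}^n 1_{\{l_i\ne-\hat l_i\}}\}$. $a\wedge b=\min(a,b)$. *)

theory Defs
  imports "HOL-Probability.Probability"
begin

text \<open>Probability space of the standardized noise: i.i.d. N(0,1) variables g(i,j),
  i < p (coordinate), j < n (sample). The actual noise is eps_ij = sigma_i * g(i,j),
  which is N(0, sigma_i^2) (degenerate at 0 when sigma_i = 0).\<close>
definition noise_space :: "nat \<Rightarrow> nat \<Rightarrow> (nat \<times> nat \<Rightarrow> real) measure" where
  "noise_space n p = PiM ({..<p} \<times> {..<n}) (\<lambda>_. density lborel std_normal_density)"

text \<open>Entry (j,i) of the data matrix Y (row j = Y_j^T): Y_ij = l_j mu_i + sigma_i g(i,j).\<close>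
definition data_entry ::
  "(nat \<Rightarrow> real) \<Rightarrow> (nat \<Rightarrow> real) \<Rightarrow> (nat \<Rightarrow> real) \<Rightarrow> (nat \<times> nat \<Rightarrow> real) \<Rightarrow> nat \<Rightarrow> nat \<Rightarrow> real" where
  "data_entry \<mu> l \<sigma> g j i = l j * \<mu> i + \<sigma> i * g (i, j)"

definition gram ::
  "nat \<Rightarrow> (nat \<Rightarrow> real) \<Rightarrow> (nat \<Rightarrow> real) \<Rightarrow> (nat \<Rightarrow> real) \<Rightarrow> (nat \<times> nat \<Rightarrow> real) \<Rightarrow> nat \<Rightarrow> nat \<Rightarrow> real" where
  "gram p \<mu> l \<sigma> g j k = (\<Sum>i<p. data_entry \<mu> l \<sigma> g j i * data_entry \<mu> l \<sigma> g k i)"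

definition is_eigenvalue :: "nat \<Rightarrow> (nat \<Rightarrow> nat \<Rightarrow> real) \<Rightarrow> real \<Rightarrow> bool" where
  "is_eigenvalue n K lam \<longleftrightarrow>
     (\<exists>v. (\<exists>j<n. v j \<noteq> 0) \<and> (\<forall>j<n. (\<Sum>k<n. K j k * v k) = lam * v j))"

definition unit_leading_eigenvector :: "nat \<Rightarrow> (nat \<Rightarrow> nat \<Rightarrow> real) \<Rightarrow> (nat \<Rightarrow> real) \<Rightarrow> bool" where
  "unit_leading_eigenvector n K v \<longleftrightarrow>
     (\<Sum>j<n. (v j)\<^sup>2) = 1 \<and>
     (\<exists>lam. (\<forall>j<n. (\<Sum>k<n. K j k * v k) = lam * v j) \<and>
            (\<forall>lam'. is_eigenvalue n K lam' \<longrightarrow> lam' \<le> lam))"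

definition miscl_rate :: "nat \<Rightarrow> (nat \<Rightarrow> real) \<Rightarrow> (nat \<Rightarrow> real) \<Rightarrow> real" where
  "miscl_rate n l lh =
     min (real (card {j\<in>{..<n}. l j \<noteq> lh j})) (real (card {j\<in>{..<n}. l j \<noteq> - lh j})) / real n"

definition norm2 :: "nat \<Rightarrow> (nat \<Rightarrow> real) \<Rightarrow> real" where
  "norm2 p \<mu> = sqrt (\<Sum>i<p. (\<mu> i)\<^sup>2)"

text \<open>sigma_* = max_i sigma_i (taken as 0 when p = 0).\<close>
definition sigma_star :: "nat \<Rightarrow> (nat \<Rightarrow> real) \<Rightarrow> real" where
  "sigma_star p \<sigma> = Max (insert 0 (\<sigma> ` {..<p}))"

definition sigma_tilde :: "nat \<Rightarrow> (nat \<Rightarrow> real) \<Rightarrow> real" where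
  "sigma_tilde p \<sigma> = root 4 (\<Sum>i<p. (\<sigma> i) ^ 4)"

text \<open>Right-hand side (without C): the fraction min 1; when mu = 0 the fraction is
  read as +infinity (so the bound is 1).\<close>
definition error_bound :: "nat \<Rightarrow> nat \<Rightarrow> (nat \<Rightarrow> real) \<Rightarrow> (nat \<Rightarrow> real) \<Rightarrow> real" where
  "error_bound n p \<mu> \<sigma> =
     (if norm2 p \<mu> = 0 then 1 else
      min ((real n * norm2 p \<mu> * sigma_star p \<sigma> + real n * (sigma_star p \<sigma>)\<^sup>2
            + sqrt (real n) * (sigma_tilde p \<sigma>)\<^sup>2) / (real n * (norm2 p \<mu>)\<^sup>2)) 1)"

end

theory Submission
  imports Defs
begin

text \<open>Write Y = l \<mu>^T + E. The leading eigenvector v of Y Y^T has Rayleigh quotient at least that of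
  the normalised truth u = l / sqrt n. Expanding both, the sine s of the angle between u and v
  satisfies n |\<mu>|^2 s \<le> 4 (sqrt n |E \<mu>| + \<Lambda>), where \<Lambda> is the operator norm of the centred noise
  Gram matrix, and the misclassification rate is at most 2 s^2.
  In expectation |E \<mu>| \<le> sqrt n \<sigma>_* |\<mu>|. The operator norm is reduced to a finite net of the sphere,
  on which the quadratic form is a weighted sum of centred chi-square variables with an explicit
  moment generating function. A union bound in exponential form, at a temperature balancing n
  against \<sigma>~^4, bounds the expectation of \<Lambda> by a multiple of n \<sigma>_*^2 + sqrt n \<sigma>~^2.\<close>

section \<open>Gaussian integrals\<close>

abbreviation std_normal :: "real measure" where
  "std_normal \<equiv> density lborel std_normal_density"

lemma prob_space_std_normal: "prob_space std_normal"
  by (rule prob_space_normal_density) simp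

lemma noise_space_eq: "noise_space n p = PiM ({..<p} \<times> {..<n}) (\<lambda>_. std_normal)"
  by (simp add: noise_space_def)

lemma prob_space_noise_space: "prob_space (noise_space n p)"
  unfolding noise_space_eq by (intro prob_space_PiM prob_space_std_normal)

lemma indep_vars_PiM_std_normal:
  assumes "I \<noteq> {}"
  shows "prob_space.indep_vars (PiM I (\<lambda>_. std_normal)) (\<lambda>_. std_normal) (\<lambda>i \<omega>. \<omega> i) I"
proof -
  interpret P: prob_space "PiM I (\<lambda>_. std_normal)"
    by (intro prob_space_PiM prob_space_std_normal)
  have rv: "(\<lambda>\<omega>. \<omega> i) \<in> measurable (PiM I (\<lambda>_. std_normal)) std_normal" for i
  proof (cases "i \<in> I")
    case False
    have "(\<lambda>\<omega>. \<omega> i) \<in> measurable (PiM I (\<lambda>_. std_normal)) std_normal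
        \<longleftrightarrow> (\<lambda>\<omega>. undefined) \<in> measurable (PiM I (\<lambda>_. std_normal)) std_normal"
      by (rule measurable_cong) (use False in \<open>auto simp: space_PiM PiE_def extensional_def\<close>)
    then show ?thesis by simp
  qed simp
  have "distr (PiM I (\<lambda>_. std_normal)) (PiM I (\<lambda>_. std_normal)) (\<lambda>x. \<lambda>i\<in>I. x i)
      = distr (PiM I (\<lambda>_. std_normal)) (PiM I (\<lambda>_. std_normal)) (\<lambda>x. x)"
    by (rule distr_cong) (auto simp: space_PiM PiE_def extensional_def restrict_def)
  moreover have "(\<Pi>\<^sub>M i\<in>I. distr (PiM I (\<lambda>_. std_normal)) std_normal (\<lambda>\<omega>. \<omega> i))
      = PiM I (\<lambda>_. std_normal)"
    by (rule PiM_cong) (auto intro!: distr_PiM_component prob_space_std_normal)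
  ultimately show ?thesis
    by (subst P.indep_vars_iff_distr_eq_PiM[OF assms rv]) simp
qed

lemma distributed_PiM_std_normal_component:
  assumes "k \<in> I"
  shows "distributed (PiM I (\<lambda>_. std_normal)) lborel (\<lambda>\<omega>. \<omega> k) std_normal_density"
proof -
  have meas: "(\<lambda>\<omega>. \<omega> k) \<in> measurable (PiM I (\<lambda>_. std_normal)) std_normal"
    using assms by simp
  then have meas': "(\<lambda>\<omega>. \<omega> k) \<in> measurable (PiM I (\<lambda>_. std_normal)) lborel"
    by (simp add: measurable_def)
  have "distr (PiM I (\<lambda>_. std_normal)) lborel (\<lambda>\<omega>. \<omega> k)
      = distr (PiM I (\<lambda>_. std_normal)) std_normal (\<lambda>\<omega>. \<omega> k)"
    by (rule measure_eqI) (simp_all add: emeasure_distr[OF meas] emeasure_distr[OF meas'])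
  also have "\<dots> = std_normal"
    using distr_PiM_component[of I "\<lambda>_. std_normal" k] prob_space_std_normal assms by simp
  finally show ?thesis unfolding distributed_def using meas' by simp
qed

lemma distributed_lin_comb_std_normal:
  assumes fin: "finite J" and JI: "J \<subseteq> I" and pos: "0 < (\<Sum>k\<in>J. (c k)\<^sup>2)"
  shows "distributed (PiM I (\<lambda>_. std_normal)) lborel (\<lambda>\<omega>. \<Sum>k\<in>J. c k * \<omega> k)
           (normal_density 0 (sqrt (\<Sum>k\<in>J. (c k)\<^sup>2)))"
proof -
  interpret P: prob_space "PiM I (\<lambda>_. std_normal)"
    by (intro prob_space_PiM prob_space_std_normal)
  define J' where "J' = {k\<in>J. c k \<noteq> 0}"
  have "J' \<noteq> {}"
    using pos unfolding J'_def by (metis (mono_tags, lifting) empty_Collect_eq power_zero_numeral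
        sum.neutral less_irrefl)
  then have "I \<noteq> {}" using JI J'_def by auto
  have "P.indep_vars (\<lambda>_. std_normal) (\<lambda>i \<omega>. \<omega> i) J'"
    by (rule P.indep_vars_subset[OF indep_vars_PiM_std_normal[OF \<open>I \<noteq> {}\<close>]])
       (use JI in \<open>auto simp: J'_def\<close>)
  then have ind: "P.indep_vars (\<lambda>_. borel) (\<lambda>k \<omega>. c k * \<omega> k) J'"
    by (rule P.indep_vars_compose2) simp
  have "distributed (PiM I (\<lambda>_. std_normal)) lborel (\<lambda>\<omega>. c k * \<omega> k) (normal_density 0 \<bar>c k\<bar>)"
    if "k \<in> J'" for k
  proof -
    have "distributed (PiM I (\<lambda>_. std_normal)) lborel (\<lambda>\<omega>. \<omega> k) std_normal_density"
      using that JI by (intro distributed_PiM_std_normal_component) (auto simp: J'_def)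
    from P.normal_density_affine[OF this, where \<alpha>="c k" and \<beta>=0] that
    show ?thesis by (auto simp: J'_def)
  qed
  then have "distributed (PiM I (\<lambda>_. std_normal)) lborel (\<lambda>x. \<Sum>k\<in>J'. c k * x k)
      (normal_density (\<Sum>k\<in>J'. 0) (sqrt (\<Sum>k\<in>J'. \<bar>c k\<bar>\<^sup>2)))"
    using fin by (intro P.sum_indep_normal[OF _ \<open>J' \<noteq> {}\<close> ind]) (auto simp: J'_def)
  moreover have "(\<lambda>x. \<Sum>k\<in>J'. c k * x k) = (\<lambda>x. \<Sum>k\<in>J. c k * x k)"
    unfolding J'_def by (intro ext sum.mono_neutral_left) (use fin in auto)
  moreover have "(\<Sum>k\<in>J'. \<bar>c k\<bar>\<^sup>2) = (\<Sum>k\<in>J. (c k)\<^sup>2)"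
    unfolding J'_def power2_abs by (intro sum.mono_neutral_left) (use fin in auto)
  ultimately show ?thesis by simp
qed

lemma normal_density_mult_exp_sq:
  fixes r t y :: real
  assumes r: "0 < r" and a: "0 < 1 - 2*t*r\<^sup>2"
  shows "normal_density 0 r y * exp (t*y\<^sup>2) =
         (1/sqrt (1 - 2*t*r\<^sup>2)) * normal_density 0 (r / sqrt (1 - 2*t*r\<^sup>2)) y"
proof -
  define a where "a = 1 - 2*t*r\<^sup>2"
  have sa: "0 < sqrt a" using a by (simp add: a_def)
  have e: "- y\<^sup>2 / (2 * r\<^sup>2) + t * y\<^sup>2 = - y\<^sup>2 / (2 * (r / sqrt a)\<^sup>2)"
    using r sa by (simp add: power_divide a_def field_simps)
  have s1: "sqrt (2 * pi * r\<^sup>2) = sqrt (2*pi) * r" using r by (simp add: real_sqrt_mult)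
  have s2: "sqrt (2 * pi * (r / sqrt a)\<^sup>2) = sqrt (2*pi) * (r / sqrt a)"
    using r sa by (simp add: real_sqrt_mult real_sqrt_divide)
  have "normal_density 0 r y * exp (t*y\<^sup>2)
      = 1 / sqrt (2 * pi * r\<^sup>2) * exp (- y\<^sup>2 / (2 * r\<^sup>2) + t * y\<^sup>2)"
    by (simp add: normal_density_def mult_exp_exp algebra_simps)
  also have "\<dots> = (1/sqrt a) * normal_density 0 (r / sqrt a) y"
    unfolding e s1 normal_density_def s2 using r sa by (simp add: field_simps)
  finally show ?thesis by (simp add: a_def)
qed

lemma nn_integral_normal_exp_sq:
  fixes r t :: real
  assumes r: "0 < r" and a: "0 < 1 - 2*t*r\<^sup>2"
  shows "(\<integral>\<^sup>+y. ennreal (normal_density 0 r y) * ennreal (exp (t*y\<^sup>2)) \<partial>lborel)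
          = ennreal (1/sqrt (1 - 2*t*r\<^sup>2))"
proof -
  define r' where "r' = r / sqrt (1 - 2*t*r\<^sup>2)"
  have "(\<integral>\<^sup>+y. ennreal (normal_density 0 r y) * ennreal (exp (t*y\<^sup>2)) \<partial>lborel)
      = (\<integral>\<^sup>+y. ennreal (1/sqrt (1 - 2*t*r\<^sup>2)) * ennreal (normal_density 0 r' y) \<partial>lborel)"
    using a by (intro nn_integral_cong)
      (simp add: r'_def ennreal_mult[symmetric] normal_density_mult_exp_sq[OF r a] del: ennreal_mult)
  also have "\<dots> = ennreal (1/sqrt (1 - 2*t*r\<^sup>2))"
    using r a by (subst nn_integral_cmult) (simp_all add: r'_def nn_integral_eq_integral)
  finally show ?thesis .
qed

lemma nn_integral_normal_sq:
  fixes r :: real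
  assumes r: "0 < r"
  shows "(\<integral>\<^sup>+y. ennreal (normal_density 0 r y) * ennreal (y\<^sup>2) \<partial>lborel) = ennreal (r\<^sup>2)"
proof -
  have "(\<integral>\<^sup>+y. ennreal (normal_density 0 r y) * ennreal (y\<^sup>2) \<partial>lborel)
      = (\<integral>\<^sup>+y. ennreal (normal_density 0 r y * (y - 0)^(2*1)) \<partial>lborel)"
    by (intro nn_integral_cong) (simp add: ennreal_mult'[symmetric] del: ennreal_mult')
  also have "\<dots> = ennreal (\<integral>y. normal_density 0 r y * (y - 0)^(2*1) \<partial>lborel)"
    by (intro nn_integral_eq_integral integrable_normal_moment) (use r in auto)
  finally show ?thesis
    using integral_normal_moment_even[of r 0 1] r by simp
qed

lemma nn_integral_lin_comb_std_normal:
  assumes fin: "finite J" and JI: "J \<subseteq> I" and pos: "0 < (\<Sum>k\<in>J. (c k)\<^sup>2)"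
    and F: "F \<in> borel_measurable borel"
  shows "(\<integral>\<^sup>+\<omega>. ennreal (F (\<Sum>k\<in>J. c k * \<omega> k)) \<partial>PiM I (\<lambda>_. std_normal))
       = (\<integral>\<^sup>+y. ennreal (normal_density 0 (sqrt (\<Sum>k\<in>J. (c k)\<^sup>2)) y) * ennreal (F y) \<partial>lborel)"
  by (rule distributed_nn_integral[OF distributed_lin_comb_std_normal[OF fin JI pos], symmetric])
     (use F in measurable)

lemma nn_integral_exp_lin_comb_sq:
  assumes fin: "finite J" and JI: "J \<subseteq> I" and a: "0 < 1 - 2*t*(\<Sum>k\<in>J. (c k)\<^sup>2)"
  shows "(\<integral>\<^sup>+\<omega>. ennreal (exp (t * (\<Sum>k\<in>J. c k * \<omega> k)\<^sup>2)) \<partial>PiM I (\<lambda>_. std_normal))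
          = ennreal (1/sqrt (1 - 2*t*(\<Sum>k\<in>J. (c k)\<^sup>2)))"
proof (cases "(\<Sum>k\<in>J. (c k)\<^sup>2) = 0")
  case True
  interpret P: prob_space "PiM I (\<lambda>_. std_normal)"
    by (intro prob_space_PiM prob_space_std_normal)
  from True fin have "\<forall>k\<in>J. c k = 0" by (simp add: sum_nonneg_eq_0_iff)
  then show ?thesis using True by (simp add: P.emeasure_space_1)
next
  case False
  then have S: "0 < (\<Sum>k\<in>J. (c k)\<^sup>2)" by (simp add: less_le sum_nonneg)
  show ?thesis
    unfolding nn_integral_lin_comb_std_normal[OF fin JI S, of "\<lambda>y. exp (t * y\<^sup>2)", simplified]
    using nn_integral_normal_exp_sq[of "sqrt (\<Sum>k\<in>J. (c k)\<^sup>2)" t] S a by simp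
qed

lemma nn_integral_lin_comb_sq:
  assumes fin: "finite J" and JI: "J \<subseteq> I"
  shows "(\<integral>\<^sup>+\<omega>. ennreal ((\<Sum>k\<in>J. c k * \<omega> k)\<^sup>2) \<partial>PiM I (\<lambda>_. std_normal))
          = ennreal (\<Sum>k\<in>J. (c k)\<^sup>2)"
proof (cases "(\<Sum>k\<in>J. (c k)\<^sup>2) = 0")
  case True
  from True fin have "\<forall>k\<in>J. c k = 0" by (simp add: sum_nonneg_eq_0_iff)
  then show ?thesis using True by simp
next
  case False
  then have S: "0 < (\<Sum>k\<in>J. (c k)\<^sup>2)" by (simp add: less_le sum_nonneg)
  show ?thesis
    unfolding nn_integral_lin_comb_std_normal[OF fin JI S, of "\<lambda>y. y\<^sup>2", simplified]
    using nn_integral_normal_sq[of "sqrt (\<Sum>k\<in>J. (c k)\<^sup>2)"] S by simp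
qed

section \<open>Quadratic forms\<close>

definition sq_norm :: "nat \<Rightarrow> (nat \<Rightarrow> real) \<Rightarrow> real" where
  "sq_norm n x = (\<Sum>j<n. (x j)\<^sup>2)"

definition dot :: "nat \<Rightarrow> (nat \<Rightarrow> real) \<Rightarrow> (nat \<Rightarrow> real) \<Rightarrow> real" where
  "dot n a b = (\<Sum>j<n. a j * b j)"

definition bilinear_form :: "nat \<Rightarrow> (nat \<Rightarrow> nat \<Rightarrow> real) \<Rightarrow> (nat \<Rightarrow> real) \<Rightarrow> (nat \<Rightarrow> real) \<Rightarrow> real"
  where "bilinear_form n K a b = (\<Sum>j<n. \<Sum>k<n. a j * K j k * b k)"

abbreviation quad_form :: "nat \<Rightarrow> (nat \<Rightarrow> nat \<Rightarrow> real) \<Rightarrow> (nat \<Rightarrow> real) \<Rightarrow> real" where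
  "quad_form n K a \<equiv> bilinear_form n K a a"

lemma sq_norm_nonneg: "0 \<le> sq_norm n x"
  unfolding sq_norm_def by (simp add: sum_nonneg)

lemma sq_norm_eq_0D: "sq_norm n x = 0 \<Longrightarrow> j < n \<Longrightarrow> x j = 0"
  unfolding sq_norm_def using sum_nonneg_eq_0_iff[of "{..<n}" "\<lambda>j. (x j)\<^sup>2"] by auto

lemma sq_norm_cong: "(\<And>j. j < n \<Longrightarrow> x j = y j) \<Longrightarrow> sq_norm n x = sq_norm n y"
  unfolding sq_norm_def by simp

lemma sq_norm_scale: "sq_norm n (\<lambda>j. c * x j) = c\<^sup>2 * sq_norm n x"
  unfolding sq_norm_def by (simp add: sum_distrib_left power_mult_distrib)

lemma sq_norm_add_scale:
  "sq_norm n (\<lambda>j. x j + t * y j) = sq_norm n x + 2 * t * dot n x y + t\<^sup>2 * sq_norm n y"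
  unfolding sq_norm_def dot_def
  by (simp add: algebra_simps sum.distrib sum_distrib_left power2_eq_square)

lemma sq_norm_parallelogram:
  "sq_norm n (\<lambda>j. a j + b j) + sq_norm n (\<lambda>j. a j - b j) = 2 * sq_norm n a + 2 * sq_norm n b"
  unfolding sq_norm_def
  by (simp add: sum.distrib[symmetric] sum_distrib_left power2_eq_square algebra_simps)

lemma dot_self: "dot n a a = sq_norm n a"
  unfolding dot_def sq_norm_def by (simp add: power2_eq_square)

lemma dot_commute: "dot n a b = dot n b a"
  unfolding dot_def by (simp add: mult.commute)

lemma dot_lin_left: "dot n (\<lambda>j. c * x j + y j) w = c * dot n x w + dot n y w"
  unfolding dot_def by (simp add: algebra_simps sum.distrib sum_distrib_left)

lemma abs_dot_le: "\<bar>dot n a b\<bar> \<le> sqrt (sq_norm n a) * sqrt (sq_norm n b)"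
proof -
  have "(dot n a b)\<^sup>2 \<le> sq_norm n a * sq_norm n b"
    unfolding dot_def sq_norm_def by (rule Cauchy_Schwarz_ineq_sum)
  then show ?thesis by (metis real_sqrt_abs real_sqrt_le_mono real_sqrt_mult)
qed

lemma bilinear_form_cong:
  "(\<And>j. j < n \<Longrightarrow> a j = a' j) \<Longrightarrow> (\<And>j. j < n \<Longrightarrow> b j = b' j) \<Longrightarrow>
    bilinear_form n K a b = bilinear_form n K a' b'"
  unfolding bilinear_form_def by simp

lemma bilinear_form_eq_dot: "bilinear_form n K a b = dot n a (\<lambda>j. \<Sum>k<n. K j k * b k)"
  unfolding bilinear_form_def dot_def by (simp add: sum_distrib_left mult_ac)

lemma bilinear_form_lin_left:
  "bilinear_form n K (\<lambda>j. c * x j + y j) w = c * bilinear_form n K x w + bilinear_form n K y w"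
  unfolding bilinear_form_def by (simp add: algebra_simps sum.distrib sum_distrib_left)

lemma bilinear_form_lin_right:
  "bilinear_form n K w (\<lambda>j. c * x j + y j) = c * bilinear_form n K w x + bilinear_form n K w y"
  unfolding bilinear_form_def by (simp add: algebra_simps sum.distrib sum_distrib_left)

lemma bilinear_form_scale:
  "bilinear_form n K (\<lambda>j. t * a j) (\<lambda>j. r * b j) = t * r * bilinear_form n K a b"
  unfolding bilinear_form_def by (simp add: sum_distrib_left mult_ac)

lemma bilinear_form_commute:
  assumes "\<And>j k. j < n \<Longrightarrow> k < n \<Longrightarrow> K j k = K k j"
  shows "bilinear_form n K a b = bilinear_form n K b a"
  unfolding bilinear_form_def
  by (subst sum.swap) (auto intro!: sum.cong simp: assms mult_ac)

lemma quad_form_lin: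
  assumes "\<And>j k. j < n \<Longrightarrow> k < n \<Longrightarrow> K j k = K k j"
  shows "quad_form n K (\<lambda>j. c * x j + y j)
       = c\<^sup>2 * quad_form n K x + 2 * c * bilinear_form n K x y + quad_form n K y"
  unfolding bilinear_form_lin_left bilinear_form_lin_right
  using bilinear_form_commute[of n K y x, OF assms] by (simp add: algebra_simps power2_eq_square)

lemma quad_form_scale: "quad_form n K (\<lambda>j. c * x j) = c\<^sup>2 * quad_form n K x"
  by (simp add: bilinear_form_scale power2_eq_square)

lemma quad_form_uminus: "quad_form n (\<lambda>j k. - K j k) a = - quad_form n K a"
  unfolding bilinear_form_def by (simp add: sum_negf)

lemma quad_form_eq_0: "sq_norm n x = 0 \<Longrightarrow> quad_form n K x = 0"
  unfolding bilinear_form_def using sq_norm_eq_0D[of n x] by simp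

lemma quad_form_attains_max_on_sphere:
  assumes n: "1 \<le> n"
  shows "\<exists>x. sq_norm n x = 1 \<and> (\<forall>y. sq_norm n y = 1 \<longrightarrow> quad_form n K y \<le> quad_form n K x)"
proof -
  define S where "S j = (if j < n then {-1..1} else {0::real})" for j
  define T where "T = PiE UNIV S \<inter> {x. sq_norm n x = 1}"
  have "compactin (product_topology (\<lambda>_. euclidean) UNIV) (PiE UNIV S)"
    by (subst compactin_PiE) (auto simp: S_def)
  then have "compact (PiE UNIV S)" by (simp add: euclidean_product_topology)
  moreover have "closed {x::nat\<Rightarrow>real. sq_norm n x = 1}"
    unfolding sq_norm_def
    by (intro closed_Collect_eq continuous_intros continuous_on_product_coordinates)
  ultimately have "compact T" unfolding T_def by (rule compact_Int_closed)
  have unit_in_T: "y \<in> T" if "sq_norm n y = 1" "\<And>j. j \<ge> n \<Longrightarrow> y j = 0" for y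
  proof -
    have "(y j)\<^sup>2 \<le> 1" if "j < n" for j
      using \<open>sq_norm n y = 1\<close> member_le_sum[of j "{..<n}" "\<lambda>j. (y j)\<^sup>2"] that
      by (simp add: sq_norm_def)
    then show ?thesis using that by (auto simp: T_def S_def PiE_def abs_square_le_1 abs_le_iff)
  qed
  have "(\<Sum>j<n. (if j = 0 then 1 else 0 :: real)\<^sup>2) = (\<Sum>j<n. if j = 0 then 1 else 0)"
    by (intro sum.cong) auto
  then have "(\<lambda>j. if j = 0 then 1 else 0) \<in> T"
    using n by (intro unit_in_T) (simp_all add: sq_norm_def)
  moreover have "continuous_on T (quad_form n K)"
    unfolding bilinear_form_def
    by (intro continuous_intros continuous_on_subset[OF continuous_on_product_coordinates]) auto
  ultimately obtain x where x: "x \<in> T" and xmax: "\<forall>y\<in>T. quad_form n K y \<le> quad_form n K x"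
    using continuous_attains_sup[OF \<open>compact T\<close>, of "quad_form n K"] by blast
  show ?thesis
  proof (intro exI conjI allI impI)
    show "sq_norm n x = 1" using x by (simp add: T_def)
    fix y assume y: "sq_norm n y = 1"
    define y' where "y' j = (if j < n then y j else 0)" for j
    have "y' \<in> T" using y by (intro unit_in_T) (auto simp: y'_def sq_norm_cong[of n y' y])
    then show "quad_form n K y \<le> quad_form n K x"
      using xmax bilinear_form_cong[of n y' y y' y K] by (metis y'_def)
  qed
qed

lemma quad_form_le_of_sphere:
  assumes "\<And>y. sq_norm n y = 1 \<Longrightarrow> quad_form n K y \<le> m"
  shows "quad_form n K w \<le> m * sq_norm n w"
proof (cases "sq_norm n w = 0")
  case True
  then show ?thesis by (simp add: quad_form_eq_0)
next
  case False
  then have pos: "0 < sq_norm n w" using sq_norm_nonneg[of n w] by simp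
  define c where "c = 1 / sqrt (sq_norm n w)"
  have unit: "sq_norm n (\<lambda>j. c * w j) = 1"
    unfolding sq_norm_scale using pos by (simp add: c_def power_divide)
  have "c\<^sup>2 * quad_form n K w \<le> m"
    using assms[OF unit] by (simp only: quad_form_scale)
  then show ?thesis
    using pos by (simp add: c_def power_divide divide_le_eq mult.commute)
qed

lemma abs_quad_form_le_of_sphere:
  assumes "\<And>y. sq_norm n y = 1 \<Longrightarrow> \<bar>quad_form n K y\<bar> \<le> L"
  shows "\<bar>quad_form n K w\<bar> \<le> L * sq_norm n w"
  using quad_form_le_of_sphere[of n K L w] quad_form_le_of_sphere[of n "\<lambda>j k. - K j k" L w]
    assms by (force simp: quad_form_uminus abs_le_iff)

lemma linear_coeff_eq_0_if_nonpos:
  fixes a b :: real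
  assumes "\<And>t. a * t + b * t\<^sup>2 \<le> 0"
  shows "a = 0"
proof (rule ccontr)
  assume "a \<noteq> 0"
  define c where "c = \<bar>b\<bar> + 1"
  have c: "c \<ge> 1" by (simp add: c_def)
  define t where "t = a / (2 * c)"
  have "- c \<le> b" by (simp add: c_def abs_if)
  then have "- (c * t\<^sup>2) \<le> b * t\<^sup>2"
    using mult_right_mono[of "- c" b "t\<^sup>2"] by simp
  moreover have "a * t - c * t\<^sup>2 = a\<^sup>2 / (4 * c)"
    using c by (simp add: t_def power2_eq_square field_simps)
  moreover have "a\<^sup>2 / (4 * c) > 0" using \<open>a \<noteq> 0\<close> c by simp
  ultimately show False using assms[of t] by linarith
qed

text \<open>First-order optimality of x along every direction y makes the linear coefficient of
  t \<mapsto> Q(x + t y) - m |x + t y|^2 vanish, i.e. K x - m x is orthogonal to every y.\<close>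
lemma sphere_maximiser_eigenvector:
  assumes sym: "\<And>j k. j < n \<Longrightarrow> k < n \<Longrightarrow> K j k = K k j"
    and x1: "sq_norm n x = 1"
    and xmax: "\<And>y. sq_norm n y = 1 \<Longrightarrow> quad_form n K y \<le> quad_form n K x"
  shows "is_eigenvalue n K (quad_form n K x)"
proof -
  define m where "m = quad_form n K x"
  define r where "r j = (\<Sum>k<n. K j k * x k) - m * x j" for j
  have "2 * dot n y r = 0" for y
  proof (rule linear_coeff_eq_0_if_nonpos)
    fix t
    have "(\<lambda>j. x j + t * y j) = (\<lambda>j. t * y j + x j)" by (simp add: add.commute)
    then have "quad_form n K (\<lambda>j. t * y j + x j) \<le> m * sq_norm n (\<lambda>j. x j + t * y j)"
      using quad_form_le_of_sphere[of n K m, OF xmax[folded m_def]] by metis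
    then have "t\<^sup>2 * quad_form n K y + 2 * t * bilinear_form n K y x + m
        \<le> m * (1 + 2 * t * dot n x y + t\<^sup>2 * sq_norm n y)"
      by (simp only: quad_form_lin[of n K, OF sym] sq_norm_add_scale x1 m_def[symmetric])
    moreover have "bilinear_form n K y x = dot n y r + m * dot n x y"
      unfolding bilinear_form_eq_dot r_def dot_def
      by (simp add: algebra_simps sum_subtractf sum_distrib_left)
    ultimately show "2 * dot n y r * t + (quad_form n K y - m * sq_norm n y) * t\<^sup>2 \<le> 0"
      by (simp add: algebra_simps)
  qed
  then have "sq_norm n r = 0" using dot_self[of n r] by simp
  moreover have "\<exists>j<n. x j \<noteq> 0"
    using x1 unfolding sq_norm_def by (metis (no_types, lifting) power_zero_numeral sum.neutral
        lessThan_iff zero_neq_one)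
  ultimately show ?thesis
    unfolding is_eigenvalue_def m_def[symmetric] using sq_norm_eq_0D[of n r]
    by (auto simp: r_def)
qed

lemma quad_form_le_leading_eigenvector:
  assumes n: "1 \<le> n"
    and sym: "\<And>j k. j < n \<Longrightarrow> k < n \<Longrightarrow> K j k = K k j"
    and v: "unit_leading_eigenvector n K v"
    and u: "sq_norm n u = 1"
  shows "quad_form n K u \<le> quad_form n K v"
proof -
  obtain lam where ev: "\<forall>j<n. (\<Sum>k<n. K j k * v k) = lam * v j"
    and lead: "\<forall>lam'. is_eigenvalue n K lam' \<longrightarrow> lam' \<le> lam"
    and v1: "sq_norm n v = 1"
    using v unfolding unit_leading_eigenvector_def sq_norm_def by blast
  have "quad_form n K v = dot n v (\<lambda>j. lam * v j)"
    unfolding bilinear_form_eq_dot dot_def using ev by simp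
  also have "\<dots> = lam"
    using v1 dot_self[of n v] by (simp add: dot_def sum_distrib_left[symmetric] mult_ac)
  finally have qv: "quad_form n K v = lam" .
  obtain x where "sq_norm n x = 1" and xmax: "\<forall>y. sq_norm n y = 1 \<longrightarrow> quad_form n K y \<le> quad_form n K x"
    using quad_form_attains_max_on_sphere[OF n] by blast
  then have "quad_form n K x \<le> lam"
    using lead sphere_maximiser_eigenvector[of n K, OF sym] by blast
  then show ?thesis using xmax u qv by fastforce
qed

text \<open>Polarisation reduces the bilinear form to the quadratic form, and rescaling
  a \<mapsto> t a, b \<mapsto> b / t with t = sqrt (|b| / |a|) turns the bound (|a|^2 + |b|^2) / 2 into |a| |b|.\<close>
lemma abs_bilinear_form_le:
  assumes sym: "\<And>j k. j < n \<Longrightarrow> k < n \<Longrightarrow> K j k = K k j"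
    and L: "\<And>y. sq_norm n y = 1 \<Longrightarrow> \<bar>quad_form n K y\<bar> \<le> L"
  shows "\<bar>bilinear_form n K a b\<bar> \<le> L * sqrt (sq_norm n a) * sqrt (sq_norm n b)"
proof -
  have polar: "\<bar>bilinear_form n K a b\<bar> \<le> L * (sq_norm n a + sq_norm n b) / 2" for a b
  proof -
    have "4 * bilinear_form n K a b
        = quad_form n K (\<lambda>j. a j + b j) - quad_form n K (\<lambda>j. a j - b j)"
      using quad_form_lin[of n K 1 a b, OF sym] quad_form_lin[of n K "-1" b a, OF sym]
        bilinear_form_commute[of n K a b, OF sym] by (simp add: algebra_simps)
    then have "4 * \<bar>bilinear_form n K a b\<bar>
        \<le> L * sq_norm n (\<lambda>j. a j + b j) + L * sq_norm n (\<lambda>j. a j - b j)"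
      using abs_quad_form_le_of_sphere[OF L, of "\<lambda>j. a j + b j"]
        abs_quad_form_le_of_sphere[OF L, of "\<lambda>j. a j - b j"] by linarith
    also have "\<dots> = L * (2 * sq_norm n a + 2 * sq_norm n b)"
      by (simp only: distrib_left[symmetric] sq_norm_parallelogram)
    finally show ?thesis by (simp add: algebra_simps)
  qed
  show ?thesis
  proof (cases "sq_norm n a = 0 \<or> sq_norm n b = 0")
    case True
    then have "bilinear_form n K a b = 0"
      by (auto simp: bilinear_form_def sq_norm_eq_0D)
    then show ?thesis using True by auto
  next
    case False
    then have A: "0 < sqrt (sq_norm n a)" and B: "0 < sqrt (sq_norm n b)"
      using sq_norm_nonneg[of n a] sq_norm_nonneg[of n b] by auto
    define t where "t = sqrt (sqrt (sq_norm n b) / sqrt (sq_norm n a))"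
    have t: "0 < t" "t\<^sup>2 = sqrt (sq_norm n b) / sqrt (sq_norm n a)"
      using A B by (simp_all add: t_def)
    have "\<bar>bilinear_form n K a b\<bar> = \<bar>bilinear_form n K (\<lambda>j. t * a j) (\<lambda>j. (1/t) * b j)\<bar>"
      unfolding bilinear_form_scale using t by simp
    also have "\<dots> \<le> L * (t\<^sup>2 * sq_norm n a + sq_norm n b / t\<^sup>2) / 2"
      using polar[of "\<lambda>j. t * a j" "\<lambda>j. (1/t) * b j"] unfolding sq_norm_scale
      by (simp add: power_divide)
    also have "t\<^sup>2 * sq_norm n a + sq_norm n b / t\<^sup>2 = 2 * sqrt (sq_norm n a) * sqrt (sq_norm n b)"
      unfolding t(2) using A B sq_norm_nonneg[of n a] sq_norm_nonneg[of n b]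
      by (simp add: field_simps power2_eq_square flip: real_sqrt_mult)
    finally show ?thesis by simp
  qed
qed

section \<open>A net on the unit sphere\<close>

text \<open>The net consists of the integer vectors k scaled by 1 / (3 sqrt n). Rounding any unit vector
  gives a net point within distance 1/6, and the l1-constraint on k keeps the net of size at most
  exp (4 n) 3^n, which is all the union bound over the net needs.\<close>
definition net_points :: "nat \<Rightarrow> (nat \<Rightarrow> int) set" where
  "net_points n = {k \<in> PiE {..<n} (\<lambda>_. {-(4*int n)..4*int n}).
     (\<Sum>j<n. \<bar>k j\<bar>) \<le> 4*int n \<and> (\<Sum>j<n. (k j)\<^sup>2) \<le> 27*int n}"

definition net_point :: "nat \<Rightarrow> (nat \<Rightarrow> int) \<Rightarrow> nat \<Rightarrow> real" where
  "net_point n k j = real_of_int (k j) / (3 * sqrt n)"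

lemma finite_net_points: "finite (net_points n)"
  unfolding net_points_def
  by (rule finite_subset[of _ "PiE {..<n} (\<lambda>_. {-(4*int n)..4*int n})"]) (auto intro: finite_PiE)

lemma zero_in_net_points: "restrict (\<lambda>_. 0) {..<n} \<in> net_points n"
  unfolding net_points_def by (auto simp: PiE_def extensional_def)

lemma sq_norm_net_point:
  "1 \<le> n \<Longrightarrow> sq_norm n (net_point n k) = real_of_int (\<Sum>j<n. (k j)\<^sup>2) / (9 * real n)"
  unfolding sq_norm_def net_point_def by (simp add: power_divide power_mult_distrib sum_divide_distrib)

lemma sq_norm_net_point_le:
  assumes n: "1 \<le> n" and k: "k \<in> net_points n"
  shows "sq_norm n (net_point n k) \<le> 3"
proof -
  have "(\<Sum>j<n. (k j)\<^sup>2) \<le> 27 * int n" using k by (simp add: net_points_def)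
  then have "real_of_int (\<Sum>j<n. (k j)\<^sup>2) \<le> 27 * real n" by linarith
  then show ?thesis using n by (simp add: sq_norm_net_point divide_le_eq)
qed

lemma sum_abs_le_sqrt_of_unit:
  assumes "sq_norm n a = 1"
  shows "(\<Sum>j<n. \<bar>a j\<bar>) \<le> sqrt n"
  using abs_dot_le[of n "\<lambda>j. \<bar>a j\<bar>" "\<lambda>_. 1"] assms by (simp add: dot_def sq_norm_def)

definition net_round :: "nat \<Rightarrow> (nat \<Rightarrow> real) \<Rightarrow> nat \<Rightarrow> int" where
  "net_round n a = restrict (\<lambda>j. round (3 * sqrt n * a j)) {..<n}"

lemma abs_net_round_sub_le: "j < n \<Longrightarrow> \<bar>of_int (net_round n a j) - 3 * sqrt n * a j\<bar> \<le> 1/2"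
  using of_int_round_abs_le by (simp add: net_round_def)

lemma sq_norm_sub_net_round_le:
  assumes n: "1 \<le> n"
  shows "sq_norm n (\<lambda>j. a j - net_point n (net_round n a) j) \<le> 1/36"
proof -
  let ?k = "net_round n a"
  have sn: "0 < sqrt (real n)" using n by simp
  have "(a j - net_point n ?k j)\<^sup>2 \<le> 1 / (36 * n)" if "j < n" for j
  proof -
    have "a j - net_point n ?k j = (3 * sqrt n * a j - of_int (?k j)) / (3 * sqrt n)"
      using sn by (simp add: net_point_def field_simps)
    then have "\<bar>a j - net_point n ?k j\<bar> = \<bar>of_int (?k j) - 3 * sqrt n * a j\<bar> / (3 * sqrt n)"
      using sn by (simp add: abs_minus_commute)
    also have "\<dots> \<le> 1 / (6 * sqrt n)"
      using abs_net_round_sub_le[OF that] sn by (simp add: divide_le_eq)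
    finally have "\<bar>a j - net_point n ?k j\<bar>\<^sup>2 \<le> (1 / (6 * sqrt n))\<^sup>2"
      by (rule power_mono) simp
    then show ?thesis by (simp add: power_divide power_mult_distrib)
  qed
  then show ?thesis
    using n sum_mono[of "{..<n}" "\<lambda>j. (a j - net_point n ?k j)\<^sup>2" "\<lambda>_. 1 / (36 * n)"]
    by (simp add: sq_norm_def)
qed

lemma net_round_in_net_points:
  assumes n: "1 \<le> n" and a: "sq_norm n a = 1"
  shows "net_round n a \<in> net_points n"
proof -
  let ?k = "net_round n a"
  have sn: "0 < sqrt (real n)" using n by simp
  have "\<bar>real_of_int (?k j)\<bar> \<le> 3 * sqrt n * \<bar>a j\<bar> + 1/2" if "j < n" for j
    using abs_triangle_ineq2[of "real_of_int (?k j)" "3 * sqrt n * a j"] abs_net_round_sub_le[OF that, where a=a] sn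
    by (simp add: abs_mult)
  then have "(\<Sum>j<n. real_of_int \<bar>?k j\<bar>) \<le> (\<Sum>j<n. 3 * sqrt n * \<bar>a j\<bar> + 1/2)"
    by (intro sum_mono) simp
  also have "\<dots> = 3 * sqrt n * (\<Sum>j<n. \<bar>a j\<bar>) + n/2"
    by (simp add: sum.distrib sum_distrib_left)
  also have "\<dots> \<le> 3 * (sqrt n * sqrt n) + n/2"
    using mult_left_mono[OF sum_abs_le_sqrt_of_unit[OF a], of "3 * sqrt n"] by (simp add: mult.assoc)
  finally have "real_of_int (\<Sum>j<n. \<bar>?k j\<bar>) \<le> real_of_int (4 * int n)" by simp
  then have l1: "(\<Sum>j<n. \<bar>?k j\<bar>) \<le> 4 * int n" by (simp only: of_int_le_iff)
  have "sq_norm n (net_point n ?k) \<le> sq_norm n (\<lambda>j. a j + (a j - net_point n ?k j))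
      + sq_norm n (\<lambda>j. a j - (a j - net_point n ?k j))"
    using sq_norm_nonneg by simp
  also have "\<dots> \<le> 3"
    unfolding sq_norm_parallelogram using a sq_norm_sub_net_round_le[OF n, of a] by simp
  finally have "real_of_int (\<Sum>j<n. (?k j)\<^sup>2) \<le> 27 * real n"
    using n unfolding sq_norm_net_point[OF n] by (simp add: divide_le_eq)
  then have l2: "(\<Sum>j<n. (?k j)\<^sup>2) \<le> 27 * int n" by linarith
  have kabs: "\<bar>?k j\<bar> \<le> 4 * int n" if "j < n" for j
    using member_le_sum[of j "{..<n}" "\<lambda>j. \<bar>?k j\<bar>"] that l1 by simp
  have "?k j \<in> {-(4*int n)..4*int n}" if "j < n" for j
    using abs_le_D1[OF kabs[OF that]] abs_le_D2[OF kabs[OF that]] by simp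
  then show ?thesis
    using l1 l2 unfolding net_points_def by (auto simp: net_round_def PiE_def extensional_def)
qed

lemma net_points_approx:
  assumes "1 \<le> n" and "sq_norm n a = 1"
  shows "\<exists>k\<in>net_points n. sq_norm n (\<lambda>j. a j - net_point n k j) \<le> 1/36"
  using net_round_in_net_points[OF assms] sq_norm_sub_net_round_le[OF assms(1)] by blast

lemma sum_half_pow_abs:
  "(\<Sum>t\<in>{- int m..int m}. (1/2::real) ^ nat \<bar>t\<bar>) = 3 - 2 * (1/2) ^ m"
proof (induction m)
  case (Suc m)
  have "{- int (Suc m)..int (Suc m)} = insert (int (Suc m)) (insert (- int (Suc m)) {- int m..int m})"
    by auto
  moreover have "nat (1 + int m) = Suc m" "nat (int m + 1) = Suc m" "nat (- 1 - int m) = 0" by auto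
  ultimately show ?case using Suc by simp
qed simp

lemma sum_exp_minus_abs_le: "(\<Sum>t\<in>{- int m..int m}. exp (- real_of_int \<bar>t\<bar>)) \<le> 3"
proof -
  have "exp (- 1) \<le> (1/2::real)"
    using exp_ge_add_one_self[of 1] by (simp add: exp_minus field_simps)
  moreover have "exp (- real_of_int \<bar>t\<bar>) = exp (- 1) ^ nat \<bar>t\<bar>" for t :: int
    by (simp add: exp_of_nat_mult[symmetric])
  ultimately have "exp (- real_of_int \<bar>t\<bar>) \<le> (1/2::real) ^ nat \<bar>t\<bar>" for t :: int
    by (simp add: power_mono)
  then have "(\<Sum>t\<in>{- int m..int m}. exp (- real_of_int \<bar>t\<bar>))
      \<le> (\<Sum>t\<in>{- int m..int m}. (1/2::real) ^ nat \<bar>t\<bar>)"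
    by (intro sum_mono)
  also have "\<dots> = 3 - 2 * (1/2) ^ m" by (rule sum_half_pow_abs)
  also have "\<dots> \<le> 3" by simp
  finally show ?thesis .
qed

lemma card_net_points_le: "real (card (net_points n)) \<le> exp (4 * n) * 3 ^ n"
proof -
  let ?P = "PiE {..<n} (\<lambda>_. {-(4*int n)..4*int n})"
  have "real (card (net_points n)) = (\<Sum>k\<in>net_points n. 1)" by simp
  also have "\<dots> \<le> (\<Sum>k\<in>net_points n. exp (4 * n) * (\<Prod>j<n. exp (- real_of_int \<bar>k j\<bar>)))"
  proof (rule sum_mono)
    fix k assume "k \<in> net_points n"
    then have "(\<Sum>j<n. \<bar>k j\<bar>) \<le> 4 * int n" by (simp add: net_points_def)
    then have "real_of_int (\<Sum>j<n. \<bar>k j\<bar>) \<le> real_of_int (4 * int n)"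
      by (simp only: of_int_le_iff)
    then have "(\<Sum>j<n. real_of_int \<bar>k j\<bar>) \<le> 4 * real n" by simp
    then show "1 \<le> exp (4 * n) * (\<Prod>j<n. exp (- real_of_int \<bar>k j\<bar>))"
      by (simp add: exp_sum[symmetric] sum_negf exp_add[symmetric])
  qed
  also have "\<dots> \<le> (\<Sum>k\<in>?P. exp (4 * n) * (\<Prod>j<n. exp (- real_of_int \<bar>k j\<bar>)))"
    by (rule sum_mono2) (auto simp: net_points_def prod_nonneg intro: finite_PiE)
  also have "\<dots> = exp (4 * n) * (\<Prod>j<n. \<Sum>t\<in>{-(4*int n)..4*int n}. exp (- real_of_int \<bar>t\<bar>))"
    by (subst prod_sum_PiE) (auto simp: sum_distrib_left)
  also have "\<dots> \<le> exp (4 * n) * (\<Prod>j<n. 3)"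
    using sum_exp_minus_abs_le[of "4*n"]
    by (intro mult_left_mono prod_mono) (auto intro: sum_nonneg)
  finally show ?thesis by simp
qed

lemma abs_quad_form_attains_max_on_sphere:
  assumes n: "1 \<le> n"
  obtains x where "sq_norm n x = 1" "\<And>y. sq_norm n y = 1 \<Longrightarrow> \<bar>quad_form n K y\<bar> \<le> \<bar>quad_form n K x\<bar>"
proof -
  obtain xp where xp: "sq_norm n xp = 1"
    and xp_max: "\<forall>y. sq_norm n y = 1 \<longrightarrow> quad_form n K y \<le> quad_form n K xp"
    using quad_form_attains_max_on_sphere[OF n] by blast
  obtain xm where xm: "sq_norm n xm = 1"
    and xm_max: "\<forall>y. sq_norm n y = 1 \<longrightarrow> - quad_form n K y \<le> - quad_form n K xm"
    using quad_form_attains_max_on_sphere[OF n, of "\<lambda>j k. - K j k"] by (auto simp: quad_form_uminus)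
  show ?thesis
  proof (cases "- quad_form n K xm \<le> quad_form n K xp")
    case True
    then show ?thesis using xp xp_max xm_max by (intro that[of xp]) (auto simp: abs_le_iff)
  next
    case False
    then show ?thesis using xm xp_max xm_max by (intro that[of xm]) (auto simp: abs_le_iff)
  qed
qed

text \<open>Net points have norm at most sqrt 3 \<le> 7/4, so approximating y within 1/6 by a net point
  loses at most 2 L (7/4) (1/6) + L (1/6)^2 = (11/18) L.\<close>
lemma abs_quad_form_le_via_net:
  assumes n: "1 \<le> n" and sym: "\<And>j k. j < n \<Longrightarrow> k < n \<Longrightarrow> K j k = K k j"
    and L: "\<And>y. sq_norm n y = 1 \<Longrightarrow> \<bar>quad_form n K y\<bar> \<le> L"
    and net: "\<And>k. k \<in> net_points n \<Longrightarrow> \<bar>quad_form n K (net_point n k)\<bar> \<le> \<beta>"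
    and y: "sq_norm n y = 1"
  shows "\<bar>quad_form n K y\<bar> \<le> \<beta> + 11/18 * L"
proof -
  have L0: "0 \<le> L" using L[OF y] by simp
  obtain k where k: "k \<in> net_points n"
    and close: "sq_norm n (\<lambda>j. y j - net_point n k j) \<le> 1/36"
    using net_points_approx[OF n y] by blast
  define x where "x = net_point n k"
  define e where "e = (\<lambda>j. y j - x j)"
  have "y = (\<lambda>j. 1 * x j + e j)" by (simp add: e_def)
  then have split: "quad_form n K y = quad_form n K x + 2 * bilinear_form n K x e + quad_form n K e"
    using quad_form_lin[of n K 1 x e, OF sym] by simp
  have "sq_norm n e \<le> 1/36" using close by (simp add: e_def x_def)
  then have e: "sqrt (sq_norm n e) \<le> 1/6"
    using real_sqrt_le_mono[of _ "1/36"] by (simp add: real_sqrt_divide)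
  have "sqrt (sq_norm n x) \<le> sqrt 3"
    using sq_norm_net_point_le[OF n k] by (simp add: x_def)
  also have "sqrt 3 \<le> (7/4 :: real)" by (rule real_le_lsqrt) (auto simp: power2_eq_square)
  finally have x: "sqrt (sq_norm n x) \<le> 7/4" .
  have "\<bar>bilinear_form n K x e\<bar> \<le> L * sqrt (sq_norm n x) * sqrt (sq_norm n e)"
    by (rule abs_bilinear_form_le[OF sym L])
  also have "\<dots> \<le> L * (7/4) * (1/6)"
    using L0 x e by (intro mult_mono mult_left_mono) (auto simp: sq_norm_nonneg)
  finally have xe: "\<bar>bilinear_form n K x e\<bar> \<le> L * (7/4) * (1/6)" .
  have "\<bar>quad_form n K e\<bar> \<le> L * sqrt (sq_norm n e) * sqrt (sq_norm n e)"
    by (rule abs_bilinear_form_le[OF sym L])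
  also have "\<dots> \<le> L * (1/6) * (1/6)"
    using L0 e by (intro mult_mono mult_left_mono) (auto simp: sq_norm_nonneg)
  finally have ee: "\<bar>quad_form n K e\<bar> \<le> L * (1/6) * (1/6)" .
  show ?thesis using split net[OF k] xe ee unfolding x_def by (simp add: abs_le_iff) linarith
qed

lemma abs_bilinear_form_le_of_net:
  assumes n: "1 \<le> n" and sym: "\<And>j k. j < n \<Longrightarrow> k < n \<Longrightarrow> K j k = K k j"
    and net: "\<And>k. k \<in> net_points n \<Longrightarrow> \<bar>quad_form n K (net_point n k)\<bar> \<le> \<beta>"
  shows "\<bar>bilinear_form n K a b\<bar> \<le> 3 * \<beta> * sqrt (sq_norm n a) * sqrt (sq_norm n b)"
proof -
  obtain x where x: "sq_norm n x = 1"
    and L: "\<And>y. sq_norm n y = 1 \<Longrightarrow> \<bar>quad_form n K y\<bar> \<le> \<bar>quad_form n K x\<bar>"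
    using abs_quad_form_attains_max_on_sphere[OF n] by blast
  have "\<bar>quad_form n K x\<bar> \<le> \<beta> + 11/18 * \<bar>quad_form n K x\<bar>"
    by (rule abs_quad_form_le_via_net[OF n sym L net x])
  then have L3: "\<bar>quad_form n K x\<bar> \<le> 3 * \<beta>" by linarith
  have "\<bar>bilinear_form n K a b\<bar> \<le> \<bar>quad_form n K x\<bar> * sqrt (sq_norm n a) * sqrt (sq_norm n b)"
    by (rule abs_bilinear_form_le[OF sym L])
  also have "\<dots> \<le> 3 * \<beta> * sqrt (sq_norm n a) * sqrt (sq_norm n b)"
    using L3 by (intro mult_right_mono) (auto simp: sq_norm_nonneg)
  finally show ?thesis .
qed

section \<open>The spectral estimator for a fixed noise realisation\<close>

text \<open>Write the data matrix as Y = l \<mu>^T + E with noise entries E(j,i) = \<sigma> i * g(i,j). Then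
  noise_matrix is the centred Gram matrix E E^T - (\<Sum>i. \<sigma> i^2) I, and noise_along_mean is E \<mu>.\<close>
definition noise_matrix :: "nat \<Rightarrow> (nat \<Rightarrow> real) \<Rightarrow> (nat \<times> nat \<Rightarrow> real) \<Rightarrow> nat \<Rightarrow> nat \<Rightarrow> real" where
  "noise_matrix p \<sigma> g j k =
     (\<Sum>i<p. (\<sigma> i)\<^sup>2 * g (i,j) * g (i,k)) - (if j = k then (\<Sum>i<p. (\<sigma> i)\<^sup>2) else 0)"

definition noise_along_mean ::
  "nat \<Rightarrow> (nat \<Rightarrow> real) \<Rightarrow> (nat \<Rightarrow> real) \<Rightarrow> (nat \<times> nat \<Rightarrow> real) \<Rightarrow> nat \<Rightarrow> real" where
  "noise_along_mean p \<mu> \<sigma> g j = (\<Sum>i<p. \<mu> i * \<sigma> i * g (i,j))"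

lemma noise_matrix_sym: "noise_matrix p \<sigma> g j k = noise_matrix p \<sigma> g k j"
  unfolding noise_matrix_def by (simp add: mult_ac)

lemma gram_sym: "gram p \<mu> l \<sigma> g j k = gram p \<mu> l \<sigma> g k j"
  unfolding gram_def by (simp add: mult.commute)

lemma quad_form_noise_matrix:
  "quad_form n (noise_matrix p \<sigma> g) x = (\<Sum>i<p. (\<sigma> i)\<^sup>2 * ((\<Sum>j<n. x j * g (i,j))\<^sup>2 - sq_norm n x))"
proof -
  have "(\<Sum>j<n. \<Sum>k<n. x j * (\<Sum>i<p. (\<sigma> i)\<^sup>2 * g (i,j) * g (i,k)) * x k)
      = (\<Sum>i<p. (\<sigma> i)\<^sup>2 * (\<Sum>j<n. x j * g (i,j))\<^sup>2)"
    by (simp add: power2_eq_square sum_distrib_left sum_distrib_right mult_ac)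
       (subst sum.swap, rule sum.cong, simp, subst sum.swap, simp)
  moreover have "(\<Sum>j<n. \<Sum>k<n. x j * (if j = k then c else 0) * x k) = c * sq_norm n x" for c
  proof -
    have "(\<Sum>k<n. x j * (if j = k then c else 0) * x k) = (\<Sum>k<n. if j = k then x j * c * x k else 0)"
      for j by (rule sum.cong) auto
    then show ?thesis
      by (simp add: sum.delta sq_norm_def sum_distrib_left power2_eq_square mult_ac)
  qed
  ultimately show ?thesis
    unfolding bilinear_form_def noise_matrix_def
    by (simp add: right_diff_distrib left_diff_distrib sum_subtractf sum_distrib_right)
qed

lemma quad_form_gram:
  "quad_form n (gram p \<mu> l \<sigma> g) a = (\<Sum>i<p. (\<mu> i)\<^sup>2) * (dot n l a)\<^sup>2
     + 2 * dot n l a * dot n a (noise_along_mean p \<mu> \<sigma> g)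
     + quad_form n (noise_matrix p \<sigma> g) a + (\<Sum>i<p. (\<sigma> i)\<^sup>2) * sq_norm n a"
proof -
  define w where "w i = (\<Sum>j<n. a j * g (i,j))" for i
  have row: "(\<Sum>j<n. a j * data_entry \<mu> l \<sigma> g j i) = \<mu> i * dot n l a + \<sigma> i * w i" for i
    unfolding data_entry_def dot_def w_def
    by (simp add: algebra_simps sum.distrib sum_distrib_left)
  have "quad_form n (gram p \<mu> l \<sigma> g) a
      = (\<Sum>i<p. (\<Sum>j<n. a j * data_entry \<mu> l \<sigma> g j i) * (\<Sum>k<n. a k * data_entry \<mu> l \<sigma> g k i))"
    unfolding bilinear_form_def gram_def
    by (simp add: sum_distrib_left sum_distrib_right mult_ac)
       (subst sum.swap, rule sum.cong, simp, subst sum.swap, simp)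
  also have "\<dots> = (\<Sum>i<p. (\<mu> i * dot n l a + \<sigma> i * w i)\<^sup>2)"
    by (simp add: row power2_eq_square)
  also have "\<dots> = (\<Sum>i<p. (\<mu> i)\<^sup>2) * (dot n l a)\<^sup>2 + 2 * dot n l a * (\<Sum>i<p. \<mu> i * \<sigma> i * w i)
       + (\<Sum>i<p. (\<sigma> i)\<^sup>2 * (w i)\<^sup>2)"
    by (simp add: power2_eq_square algebra_simps sum.distrib sum_distrib_left sum_distrib_right)
  also have "(\<Sum>i<p. \<mu> i * \<sigma> i * w i) = dot n a (noise_along_mean p \<mu> \<sigma> g)"
    unfolding w_def dot_def noise_along_mean_def
    by (simp add: sum_distrib_left mult_ac) (rule sum.swap)
  also have "(\<Sum>i<p. (\<sigma> i)\<^sup>2 * (w i)\<^sup>2)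
      = quad_form n (noise_matrix p \<sigma> g) a + (\<Sum>i<p. (\<sigma> i)\<^sup>2) * sq_norm n a"
    unfolding quad_form_noise_matrix w_def
    by (simp add: algebra_simps sum_subtractf sum_distrib_right sum_distrib_left)
  finally show ?thesis by simp
qed

lemma abs_mult_le_mult:
  fixes a b A B :: real
  assumes "\<bar>a\<bar> \<le> A" "\<bar>b\<bar> \<le> B"
  shows "\<bar>a * b\<bar> \<le> A * B"
  unfolding abs_mult using assms by (intro mult_mono) (auto intro: order_trans[OF abs_ge_zero])

lemma sq_norm_sign_vector:
  assumes n: "1 \<le> n" and l: "\<forall>j<n. l j = -1 \<or> l j = 1"
  shows "sq_norm n (\<lambda>j. l j / sqrt n) = 1"
proof -
  have "sq_norm n (\<lambda>j. l j / sqrt n) = (\<Sum>j<n. 1 / n)"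
    unfolding sq_norm_def using l by (intro sum.cong) (auto simp: power_divide)
  then show ?thesis using n by simp
qed

lemma dot_sign_vector:
  assumes n: "1 \<le> n" and l: "\<forall>j<n. l j = -1 \<or> l j = 1"
  shows "dot n l (\<lambda>j. l j / sqrt n) = sqrt n"
proof -
  have "dot n l (\<lambda>j. l j / sqrt n) = (\<Sum>j<n. 1 / sqrt n)"
    unfolding dot_def using l by (intro sum.cong) auto
  then show ?thesis using n by (simp add: real_div_sqrt)
qed

lemma perturbation_terms_le:
  fixes c s Z \<Lambda> x y a b e :: real
  assumes c: "\<bar>c\<bar> \<le> 1" and s0: "0 \<le> s" and s1: "s \<le> 1"
    and x: "\<bar>x\<bar> \<le> Z" and y: "\<bar>y\<bar> \<le> s * Z"
    and a: "\<bar>a\<bar> \<le> \<Lambda>" and b: "\<bar>b\<bar> \<le> \<Lambda> * s" and e: "\<bar>e\<bar> \<le> \<Lambda> * s * s"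
  shows "- s\<^sup>2 * x + c * y \<le> 2 * s * Z" and "- s\<^sup>2 * a + 2 * c * b + e \<le> 4 * s * \<Lambda>"
proof -
  have s2: "s\<^sup>2 \<le> s" using s0 s1 by (simp add: power2_eq_square mult_left_le_one_le)
  have "0 \<le> \<Lambda>" using a by simp
  have "\<bar>s\<^sup>2 * x\<bar> \<le> s * Z" "\<bar>c * y\<bar> \<le> 1 * (s * Z)"
    using abs_mult_le_mult[OF _ x, of "s\<^sup>2" s] abs_mult_le_mult[OF c y] s2 by simp_all
  then show "- s\<^sup>2 * x + c * y \<le> 2 * s * Z" by (simp add: abs_le_iff)
  have "\<bar>s\<^sup>2 * a\<bar> \<le> s * \<Lambda>" "\<bar>c * b\<bar> \<le> 1 * (\<Lambda> * s)" "\<Lambda> * s * s \<le> \<Lambda> * s"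
    using abs_mult_le_mult[of "s\<^sup>2" s a \<Lambda>] abs_mult_le_mult[OF c b] s2 \<open>0 \<le> \<Lambda>\<close>
      mult_left_mono[OF s1, of "\<Lambda> * s"] s0 a
    by (simp_all add: power2_eq_square)
  then show "- s\<^sup>2 * a + 2 * c * b + e \<le> 4 * s * \<Lambda>"
    using e unfolding abs_le_iff by (simp add: algebra_simps)
qed

text \<open>With v = c u + d and d orthogonal to u, the Rayleigh comparison leaves the signal gain
  (\<Sum>i. \<mu> i^2) n s^2 on one side and noise terms of order s = |d| on the other.\<close>
lemma leading_eigenvector_misalignment:
  assumes n: "1 \<le> n" and l: "\<forall>j<n. l j = -1 \<or> l j = 1"
    and v: "unit_leading_eigenvector n (gram p \<mu> l \<sigma> g) v"
    and \<Lambda>: "\<And>a b. \<bar>bilinear_form n (noise_matrix p \<sigma> g) a b\<bar>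
               \<le> \<Lambda> * sqrt (sq_norm n a) * sqrt (sq_norm n b)"
  defines "u \<equiv> \<lambda>j. l j / sqrt n"
  defines "c \<equiv> dot n u v"
  defines "s \<equiv> sqrt (1 - c\<^sup>2)"
  defines "Z \<equiv> sqrt (sq_norm n (noise_along_mean p \<mu> \<sigma> g))"
  shows "(\<Sum>i<p. (\<mu> i)\<^sup>2) * n * s\<^sup>2 \<le> 4 * s * (sqrt n * Z + \<Lambda>)"
proof -
  let ?B = "bilinear_form n (noise_matrix p \<sigma> g)"
  let ?z = "noise_along_mean p \<mu> \<sigma> g"
  have u1: "sq_norm n u = 1" unfolding u_def by (rule sq_norm_sign_vector[OF n l])
  have v1: "sq_norm n v = 1" using v unfolding unit_leading_eigenvector_def sq_norm_def by simp
  have lu: "dot n l u = sqrt n" unfolding u_def by (rule dot_sign_vector[OF n l])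
  have lv: "dot n l v = sqrt n * c"
    using n unfolding c_def u_def dot_def by (simp add: sum_divide_distrib[symmetric])
  define d where "d = (\<lambda>j. v j + (- c) * u j)"
  have v_split: "v = (\<lambda>j. c * u j + d j)" by (simp add: d_def)
  have "sq_norm n d = 1 - c\<^sup>2"
    unfolding d_def sq_norm_add_scale u1 v1 using dot_commute[of n u v]
    by (simp add: c_def power2_eq_square)
  then have c1: "c\<^sup>2 \<le> 1" and ss: "s\<^sup>2 = 1 - c\<^sup>2" and sd: "sqrt (sq_norm n d) = s"
    using sq_norm_nonneg[of n d] by (simp_all add: s_def)
  have s0: "0 \<le> s" and s1: "s \<le> 1" and c_abs: "\<bar>c\<bar> \<le> 1"
    using c1 by (simp_all add: s_def abs_square_le_1)
  have "quad_form n (gram p \<mu> l \<sigma> g) u \<le> quad_form n (gram p \<mu> l \<sigma> g) v"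
    using gram_sym by (intro quad_form_le_leading_eigenvector[OF n _ v u1]) blast
  moreover have "dot n v ?z = c * dot n u ?z + dot n d ?z"
    unfolding v_split by (rule dot_lin_left)
  moreover have "?B v v = c\<^sup>2 * ?B u u + 2 * c * ?B u d + ?B d d"
    unfolding v_split by (rule quad_form_lin) (rule noise_matrix_sym)
  ultimately have key: "(\<Sum>i<p. (\<mu> i)\<^sup>2) * n * s\<^sup>2
      \<le> 2 * sqrt n * (- s\<^sup>2 * dot n u ?z + c * dot n d ?z)
        + (- s\<^sup>2 * ?B u u + 2 * c * ?B u d + ?B d d)"
    unfolding quad_form_gram lu lv u1 v1 ss by (simp add: algebra_simps power2_eq_square)
  have "\<bar>dot n u ?z\<bar> \<le> Z" "\<bar>dot n d ?z\<bar> \<le> s * Z"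
    using abs_dot_le[of n u ?z] abs_dot_le[of n d ?z] u1 sd by (simp_all add: Z_def)
  moreover have "\<bar>?B u u\<bar> \<le> \<Lambda>" "\<bar>?B u d\<bar> \<le> \<Lambda> * s" "\<bar>?B d d\<bar> \<le> \<Lambda> * s * s"
    using \<Lambda>[of u u] \<Lambda>[of u d] \<Lambda>[of d d] u1 sd by simp_all
  ultimately have mean: "- s\<^sup>2 * dot n u ?z + c * dot n d ?z \<le> 2 * s * Z"
    and cov: "- s\<^sup>2 * ?B u u + 2 * c * ?B u d + ?B d d \<le> 4 * s * \<Lambda>"
    using perturbation_terms_le[OF c_abs s0 s1] by blast+
  have "2 * sqrt n * (- s\<^sup>2 * dot n u ?z + c * dot n d ?z) \<le> 2 * sqrt n * (2 * s * Z)"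
    using mean by (intro mult_left_mono) auto
  with key cov show ?thesis by (simp add: algebra_simps)
qed

lemma card_sign_mismatch_le:
  assumes n: "1 \<le> n" and l: "\<forall>j<n. l j = -1 \<or> l j = 1"
  shows "real (card {j\<in>{..<n}. l j \<noteq> sgn (v j)}) / n \<le> sq_norm n (\<lambda>j. v j - l j / sqrt n)"
proof -
  let ?A = "{j\<in>{..<n}. l j \<noteq> sgn (v j)}"
  have "1 / n \<le> (v j - l j / sqrt n)\<^sup>2" if "j \<in> ?A" for j
  proof -
    have "l j * v j \<le> 0" "(l j)\<^sup>2 = 1"
      using l that by (auto simp: sgn_if mult_le_0_iff split: if_splits)
    then have "(v j - l j / sqrt n)\<^sup>2 = (v j)\<^sup>2 - 2 * (l j * v j) / sqrt n + 1 / n"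
      using n by (simp add: power2_diff power_divide field_simps)
    moreover have "2 * (l j * v j) / sqrt n \<le> 0"
      using \<open>l j * v j \<le> 0\<close> n by (simp add: divide_nonpos_pos)
    ultimately show ?thesis using zero_le_power2[of "v j"] by linarith
  qed
  then have "real (card ?A) / n \<le> (\<Sum>j\<in>?A. (v j - l j / sqrt n)\<^sup>2)"
    using sum_mono[of ?A "\<lambda>_. 1 / n"] by simp
  also have "\<dots> \<le> sq_norm n (\<lambda>j. v j - l j / sqrt n)"
    unfolding sq_norm_def by (rule sum_mono2) auto
  finally show ?thesis .
qed

text \<open>Each of the two label assignments l and -l is compared with sgn v by the lemma above,
  applied to v and to -v; the better one misses at most min (2 - 2 c, 2 + 2 c) = 2 - 2 |c|.\<close>
lemma miscl_rate_le_alignment: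
  assumes n: "1 \<le> n" and l: "\<forall>j<n. l j = -1 \<or> l j = 1" and v1: "sq_norm n v = 1"
  defines "c \<equiv> dot n (\<lambda>j. l j / sqrt n) v"
  shows "miscl_rate n l (\<lambda>j. sgn (v j)) \<le> 2 * (1 - c\<^sup>2)"
proof -
  define u where "u = (\<lambda>j. l j / sqrt n)"
  have u1: "sq_norm n u = 1" unfolding u_def by (rule sq_norm_sign_vector[OF n l])
  have uv: "dot n v u = c" unfolding c_def u_def by (rule dot_commute)
  have "\<bar>c\<bar> \<le> 1" using abs_dot_le[of n u v] u1 v1 by (simp add: c_def u_def)
  have A: "real (card {j\<in>{..<n}. l j \<noteq> sgn (v j)}) / n \<le> 2 - 2 * c"
    using card_sign_mismatch_le[OF n l, of v] sq_norm_add_scale[of n v "-1" u] u1 v1 uv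
    by (simp add: u_def)
  have "(- v j - u j)\<^sup>2 = (v j + 1 * u j)\<^sup>2" for j by (simp add: power2_eq_square algebra_simps)
  then have B: "real (card {j\<in>{..<n}. l j \<noteq> - sgn (v j)}) / n \<le> 2 + 2 * c"
    using card_sign_mismatch_le[OF n l, of "\<lambda>j. - v j"] sq_norm_add_scale[of n v 1 u] u1 v1 uv
    unfolding sq_norm_def by (simp add: u_def sgn_minus)
  have "miscl_rate n l (\<lambda>j. sgn (v j)) \<le> 2 - 2 * \<bar>c\<bar>"
    using A B n unfolding miscl_rate_def by (simp add: min_divide_distrib_right abs_if min_le_iff_disj)
  also have "\<dots> \<le> 2 * (1 - c\<^sup>2)"
    using mult_left_le_one_le[of "\<bar>c\<bar>" "\<bar>c\<bar>"] \<open>\<bar>c\<bar> \<le> 1\<close>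
    by (simp add: power2_eq_square)
  finally show ?thesis .
qed

lemma miscl_rate_le_noise:
  assumes n: "1 \<le> n" and l: "\<forall>j<n. l j = -1 \<or> l j = 1"
    and v: "unit_leading_eigenvector n (gram p \<mu> l \<sigma> g) v"
    and \<Lambda>: "\<And>a b. \<bar>bilinear_form n (noise_matrix p \<sigma> g) a b\<bar>
               \<le> \<Lambda> * sqrt (sq_norm n a) * sqrt (sq_norm n b)"
    and \<mu>: "0 < (\<Sum>i<p. (\<mu> i)\<^sup>2)"
  shows "miscl_rate n l (\<lambda>j. sgn (v j))
     \<le> 8 * (sqrt n * sqrt (sq_norm n (noise_along_mean p \<mu> \<sigma> g)) + \<Lambda>) / (n * (\<Sum>i<p. (\<mu> i)\<^sup>2))"
proof -
  define c where "c = dot n (\<lambda>j. l j / sqrt n) v"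
  define s where "s = sqrt (1 - c\<^sup>2)"
  define X where "X = sqrt n * sqrt (sq_norm n (noise_along_mean p \<mu> \<sigma> g)) + \<Lambda>"
  define N where "N = n * (\<Sum>i<p. (\<mu> i)\<^sup>2)"
  have v1: "sq_norm n v = 1" using v unfolding unit_leading_eigenvector_def sq_norm_def by simp
  have "\<bar>c\<bar> \<le> 1"
    using abs_dot_le[of n "\<lambda>j. l j / sqrt n" v] sq_norm_sign_vector[OF n l] v1 by (simp add: c_def)
  then have ss: "s\<^sup>2 = 1 - c\<^sup>2" and s0: "0 \<le> s" and s1: "s \<le> 1"
    by (simp_all add: s_def abs_square_le_1)
  have M: "miscl_rate n l (\<lambda>j. sgn (v j)) \<le> 2 * s\<^sup>2"
    using miscl_rate_le_alignment[OF n l v1] by (simp add: ss c_def)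
  have misalign: "N * s\<^sup>2 \<le> 4 * s * X"
    using leading_eigenvector_misalignment[OF n l v \<Lambda>] by (simp add: N_def X_def c_def s_def mult_ac)
  have N0: "0 < N" using \<mu> n by (simp add: N_def)
  have "2 * s\<^sup>2 \<le> 8 * X / N"
  proof (cases "s = 0")
    case True
    have "0 \<le> X" using \<Lambda>[of v v] v1 by (simp add: X_def sq_norm_nonneg)
    then show ?thesis using True N0 by simp
  next
    case False
    then have "N * s \<le> 4 * X" using misalign s0 by (simp add: power2_eq_square mult_ac)
    then have "s \<le> 4 * X / N" using N0 by (simp add: le_divide_eq mult.commute)
    moreover have "s\<^sup>2 \<le> s" using s0 s1 by (simp add: power2_eq_square mult_left_le_one_le)
    ultimately show ?thesis by simp
  qed
  with M show ?thesis by (simp add: X_def N_def)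
qed

section \<open>Concentration of the noise\<close>

lemma measurable_noise_coordinate [measurable]:
  "i < p \<Longrightarrow> j < n \<Longrightarrow> (\<lambda>\<omega>. \<omega> (i,j)) \<in> borel_measurable (noise_space n p)"
  unfolding noise_space_eq
  using measurable_component_singleton[of "(i,j)" "{..<p} \<times> {..<n}" "\<lambda>_. std_normal"]
  by (simp add: measurable_def)

lemma borel_measurable_quad_form_noise [measurable]:
  "(\<lambda>g. quad_form n (noise_matrix p \<sigma> g) x) \<in> borel_measurable (noise_space n p)"
  unfolding quad_form_noise_matrix by measurable

lemma borel_measurable_noise_along_mean [measurable]:
  "j < n \<Longrightarrow> (\<lambda>g. noise_along_mean p \<mu> \<sigma> g j) \<in> borel_measurable (noise_space n p)"
  unfolding noise_along_mean_def by measurable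

lemma ln_one_minus_ge:
  fixes z :: real
  assumes "\<bar>z\<bar> \<le> 1/2"
  shows "- z - 2 * z\<^sup>2 \<le> ln (1 - z)"
proof (cases "0 \<le> z")
  case True
  then show ?thesis using ln_one_minus_pos_lower_bound[of z] assms by simp
next
  case False
  then have "- z - z\<^sup>2 \<le> ln (1 - z)"
    using ln_one_plus_pos_lower_bound[of "- z"] assms by simp
  then show ?thesis using zero_le_power2[of z] by linarith
qed

text \<open>exp (-u) / sqrt (1 - 2 u) is the moment generating function of a centred chi-square
  variable with one degree of freedom.\<close>
lemma centred_chi_square_mgf_le:
  fixes u :: real
  assumes "\<bar>u\<bar> \<le> 1/4"
  shows "exp (- u) * (1 / sqrt (1 - 2 * u)) \<le> exp (4 * u\<^sup>2)"
proof -
  have a: "0 < 1 - 2 * u" using assms by simp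
  have "sqrt (1 - 2 * u) = exp (ln (1 - 2 * u) / 2)"
    using a by (simp add: exp_divide_power_eq ln_sqrt[symmetric])
  then have "exp (- u) * (1 / sqrt (1 - 2 * u)) = exp (- u - ln (1 - 2 * u) / 2)"
    by (simp add: exp_diff)
  also have "\<dots> \<le> exp (4 * u\<^sup>2)"
    using ln_one_minus_ge[of "2 * u"] assms by (simp add: abs_mult power2_eq_square)
  finally show ?thesis .
qed

lemma nn_integral_exp_row_sq:
  assumes i: "i < p" and u: "\<bar>t * sq_norm n x\<bar> \<le> 1/4"
  shows "(\<integral>\<^sup>+\<omega>. ennreal (exp (t * ((\<Sum>j<n. x j * \<omega> (i,j))\<^sup>2 - sq_norm n x))) \<partial>noise_space n p)
         \<le> ennreal (exp (4 * (t * sq_norm n x)\<^sup>2))"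
proof -
  let ?J = "(\<lambda>j. (i,j)) ` {..<n}"
  have J: "?J \<subseteq> {..<p} \<times> {..<n}" using i by auto
  have reindex: "(\<Sum>k\<in>?J. x (snd k) * \<omega> k) = (\<Sum>j<n. x j * \<omega> (i,j))"
    "(\<Sum>k\<in>?J. (x (snd k))\<^sup>2) = sq_norm n x" for \<omega> :: "nat \<times> nat \<Rightarrow> real"
    by (subst sum.reindex, simp add: inj_on_def, simp add: sq_norm_def)+
  have a: "0 < 1 - 2 * t * sq_norm n x" using u by (simp add: abs_le_iff)
  have "(\<integral>\<^sup>+\<omega>. ennreal (exp (t * ((\<Sum>j<n. x j * \<omega> (i,j))\<^sup>2 - sq_norm n x))) \<partial>noise_space n p)
      = ennreal (exp (- (t * sq_norm n x)))
        * (\<integral>\<^sup>+\<omega>. ennreal (exp (t * (\<Sum>k\<in>?J. x (snd k) * \<omega> k)\<^sup>2)) \<partial>PiM ({..<p} \<times> {..<n}) (\<lambda>_. std_normal))"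
    unfolding reindex noise_space_eq[symmetric] using i
    by (subst nn_integral_cmult[symmetric]) (auto intro!: nn_integral_cong
        simp: ennreal_mult[symmetric] exp_add[symmetric] algebra_simps simp del: ennreal_mult)
  also have "\<dots> = ennreal (exp (- (t * sq_norm n x))) * ennreal (1 / sqrt (1 - 2 * (t * sq_norm n x)))"
    using a nn_integral_exp_lin_comb_sq[OF _ J, of t "\<lambda>k. x (snd k)"] by (simp add: reindex mult.assoc)
  also have "\<dots> = ennreal (exp (- (t * sq_norm n x)) * (1 / sqrt (1 - 2 * (t * sq_norm n x))))"
    by (rule ennreal_mult[symmetric]) (use a in auto)
  also have "\<dots> \<le> ennreal (exp (4 * (t * sq_norm n x)\<^sup>2))"
    by (intro ennreal_leI centred_chi_square_mgf_le u)
  finally show ?thesis .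
qed

lemma nn_integral_prod_rows:
  assumes n: "1 \<le> n" and p: "1 \<le> p" and F: "\<And>i. F i \<in> borel_measurable borel"
  shows "(\<integral>\<^sup>+\<omega>. (\<Prod>i<p. ennreal (F i (\<Sum>j<n. x j * \<omega> (i,j)))) \<partial>noise_space n p)
       = (\<Prod>i<p. \<integral>\<^sup>+\<omega>. ennreal (F i (\<Sum>j<n. x j * \<omega> (i,j))) \<partial>noise_space n p)"
proof -
  let ?I = "{..<p} \<times> {..<n}"
  interpret P: prob_space "PiM ?I (\<lambda>_. std_normal)"
    by (intro prob_space_PiM prob_space_std_normal)
  have "?I \<noteq> {}" using n p by (auto simp: lessThan_empty_iff)
  have rows: "P.indep_vars (\<lambda>i. PiM ({i} \<times> {..<n}) (\<lambda>_. std_normal))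
      (\<lambda>i \<omega>. restrict \<omega> ({i} \<times> {..<n})) {..<p}"
    by (rule P.indep_vars_restrict[OF indep_vars_PiM_std_normal[OF \<open>?I \<noteq> {}\<close>]])
       (auto simp: disjoint_family_on_def)
  have "(\<lambda>b. \<Sum>j<n. x j * b (i,j)) \<in> borel_measurable (PiM ({i} \<times> {..<n}) (\<lambda>_. std_normal))" for i
    using measurable_component_singleton[of "(i,_)" "{i} \<times> {..<n}" "\<lambda>_. std_normal"]
    by (intro borel_measurable_sum borel_measurable_times borel_measurable_const)
       (auto simp: measurable_def)
  then have "(\<lambda>b. ennreal (F i (\<Sum>j<n. x j * b (i,j))))
      \<in> borel_measurable (PiM ({i} \<times> {..<n}) (\<lambda>_. std_normal))" for i
    using F by measurable
  then have "P.indep_vars (\<lambda>_. borel)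
      (\<lambda>i \<omega>. ennreal (F i (\<Sum>j<n. x j * restrict \<omega> ({i} \<times> {..<n}) (i,j)))) {..<p}"
    by (rule P.indep_vars_compose2[OF rows])
  then have "P.indep_vars (\<lambda>_. borel) (\<lambda>i \<omega>. ennreal (F i (\<Sum>j<n. x j * \<omega> (i,j)))) {..<p}"
    by simp
  then show ?thesis unfolding noise_space_eq
    by (rule P.indep_vars_nn_integral[rotated]) auto
qed

lemma nn_integral_exp_quad_form_noise_le:
  assumes n: "1 \<le> n" and p: "1 \<le> p"
    and small: "\<And>i. i < p \<Longrightarrow> \<bar>t * (\<sigma> i)\<^sup>2 * sq_norm n x\<bar> \<le> 1/4"
  shows "(\<integral>\<^sup>+g. ennreal (exp (t * quad_form n (noise_matrix p \<sigma> g) x)) \<partial>noise_space n p)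
         \<le> ennreal (exp (4 * t\<^sup>2 * (sq_norm n x)\<^sup>2 * (\<Sum>i<p. (\<sigma> i)^4)))"
proof -
  define F where "F i y = exp (t * (\<sigma> i)\<^sup>2 * (y\<^sup>2 - sq_norm n x))" for i y
  have "exp (t * quad_form n (noise_matrix p \<sigma> g) x) = (\<Prod>i<p. F i (\<Sum>j<n. x j * g (i,j)))" for g
    unfolding quad_form_noise_matrix F_def by (simp add: sum_distrib_left exp_sum mult.assoc)
  then have "(\<integral>\<^sup>+g. ennreal (exp (t * quad_form n (noise_matrix p \<sigma> g) x)) \<partial>noise_space n p)
      = (\<integral>\<^sup>+g. (\<Prod>i<p. ennreal (F i (\<Sum>j<n. x j * g (i,j)))) \<partial>noise_space n p)"
    by (simp add: prod_ennreal F_def)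
  also have "\<dots> = (\<Prod>i<p. \<integral>\<^sup>+g. ennreal (F i (\<Sum>j<n. x j * g (i,j))) \<partial>noise_space n p)"
    by (rule nn_integral_prod_rows[OF n p]) (simp add: F_def)
  also have "\<dots> \<le> (\<Prod>i<p. ennreal (exp (4 * (t * (\<sigma> i)\<^sup>2 * sq_norm n x)\<^sup>2)))"
    using nn_integral_exp_row_sq[of _ p "t * (\<sigma> _)\<^sup>2" n x] small
    by (intro prod_mono_ennreal) (simp add: F_def mult.assoc)
  also have "\<dots> = ennreal (exp (4 * t\<^sup>2 * (sq_norm n x)\<^sup>2 * (\<Sum>i<p. (\<sigma> i)^4)))"
    by (simp add: prod_ennreal exp_sum[symmetric] sum_distrib_left power_mult_distrib
        power2_eq_square[of "(\<sigma> _)\<^sup>2"] mult_ac)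
  finally show ?thesis .
qed

text \<open>A smooth maximum of the noise form over the net: its logarithm, divided by \<theta>, bounds every
  |Q(x)| with x in the net, while its expectation is controlled by the moment generating function.\<close>
definition net_exp_sum :: "nat \<Rightarrow> nat \<Rightarrow> (nat \<Rightarrow> real) \<Rightarrow> real \<Rightarrow> (nat \<times> nat \<Rightarrow> real) \<Rightarrow> real" where
  "net_exp_sum n p \<sigma> \<theta> g = (\<Sum>k\<in>net_points n.
     exp (\<theta> * quad_form n (noise_matrix p \<sigma> g) (net_point n k))
     + exp (- \<theta> * quad_form n (noise_matrix p \<sigma> g) (net_point n k)))"

lemma borel_measurable_net_exp_sum [measurable]:
  "(\<lambda>g. net_exp_sum n p \<sigma> \<theta> g) \<in> borel_measurable (noise_space n p)"
  unfolding net_exp_sum_def by measurable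

lemma exp_abs_le_net_exp_sum:
  assumes "k \<in> net_points n"
  shows "exp (\<theta> * \<bar>quad_form n (noise_matrix p \<sigma> g) (net_point n k)\<bar>) \<le> net_exp_sum n p \<sigma> \<theta> g"
proof -
  let ?Q = "quad_form n (noise_matrix p \<sigma> g) (net_point n k)"
  have "exp (\<theta> * \<bar>?Q\<bar>) \<le> exp (\<theta> * ?Q) + exp (- \<theta> * ?Q)"
    by (cases "0 \<le> ?Q") (auto simp: add_increasing add_increasing2 less_imp_le)
  also have "\<dots> \<le> net_exp_sum n p \<sigma> \<theta> g"
    unfolding net_exp_sum_def using assms finite_net_points
    by (intro member_le_sum) (auto intro: add_nonneg_nonneg less_imp_le)
  finally show ?thesis .
qed

lemma one_le_net_exp_sum: "1 \<le> net_exp_sum n p \<sigma> \<theta> g"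
proof -
  have "quad_form n (noise_matrix p \<sigma> g) (net_point n (restrict (\<lambda>_. 0) {..<n})) = 0"
    by (simp add: bilinear_form_def net_point_def)
  then show ?thesis
    using exp_abs_le_net_exp_sum[OF zero_in_net_points[of n], where \<theta>=\<theta> and p=p and \<sigma>=\<sigma> and g=g] by simp
qed

lemma abs_quad_form_net_point_le:
  assumes "k \<in> net_points n" and "0 < \<theta>"
  shows "\<bar>quad_form n (noise_matrix p \<sigma> g) (net_point n k)\<bar> \<le> ln (net_exp_sum n p \<sigma> \<theta> g) / \<theta>"
  using exp_abs_le_net_exp_sum[OF assms(1), of \<theta> p \<sigma> g] assms(2) one_le_net_exp_sum[of n p \<sigma> \<theta> g]
  by (simp add: le_divide_eq mult.commute ln_ge_iff)

lemma nn_integral_exp_quad_form_net_point_le: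
  assumes n: "1 \<le> n" and p: "1 \<le> p" and k: "k \<in> net_points n"
    and small: "\<And>i. i < p \<Longrightarrow> \<bar>t\<bar> * (\<sigma> i)\<^sup>2 * 3 \<le> 1/4"
  shows "(\<integral>\<^sup>+g. ennreal (exp (t * quad_form n (noise_matrix p \<sigma> g) (net_point n k))) \<partial>noise_space n p)
         \<le> ennreal (exp (36 * t\<^sup>2 * (\<Sum>i<p. (\<sigma> i)^4)))"
proof -
  let ?x = "net_point n k"
  have x3: "sq_norm n ?x \<le> 3" and x0: "0 \<le> sq_norm n ?x"
    using sq_norm_net_point_le[OF n k] sq_norm_nonneg by auto
  have "\<bar>t * (\<sigma> i)\<^sup>2 * sq_norm n ?x\<bar> \<le> \<bar>t\<bar> * (\<sigma> i)\<^sup>2 * 3" for i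
    using x3 x0 by (simp add: abs_mult mult_left_mono)
  then have "(\<integral>\<^sup>+g. ennreal (exp (t * quad_form n (noise_matrix p \<sigma> g) ?x)) \<partial>noise_space n p)
        \<le> ennreal (exp (4 * t\<^sup>2 * (sq_norm n ?x)\<^sup>2 * (\<Sum>i<p. (\<sigma> i)^4)))"
    using small by (intro nn_integral_exp_quad_form_noise_le[OF n p]) (meson order_trans)
  also have "\<dots> \<le> ennreal (exp (36 * t\<^sup>2 * (\<Sum>i<p. (\<sigma> i)^4)))"
  proof (intro ennreal_leI exp_mono)
    have "(sq_norm n ?x)\<^sup>2 \<le> 9" using x3 x0 power_mono[of _ 3 2] by fastforce
    then show "4 * t\<^sup>2 * (sq_norm n ?x)\<^sup>2 * (\<Sum>i<p. (\<sigma> i)^4) \<le> 36 * t\<^sup>2 * (\<Sum>i<p. (\<sigma> i)^4)"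
      using mult_left_mono[of "(sq_norm n ?x)\<^sup>2" 9 "4 * t\<^sup>2"]
      by (intro mult_right_mono) (auto simp: sum_nonneg)
  qed
  finally show ?thesis .
qed

lemma nn_integral_net_exp_sum_le:
  assumes n: "1 \<le> n" and p: "1 \<le> p" and \<theta>: "0 < \<theta>"
    and small: "\<And>i. i < p \<Longrightarrow> \<theta> * (\<sigma> i)\<^sup>2 * 3 \<le> 1/4"
  shows "(\<integral>\<^sup>+g. ennreal (net_exp_sum n p \<sigma> \<theta> g) \<partial>noise_space n p)
         \<le> ennreal (2 * (exp (4 * n) * 3 ^ n) * exp (36 * \<theta>\<^sup>2 * (\<Sum>i<p. (\<sigma> i)^4)))"
proof -
  define B where "B = exp (36 * \<theta>\<^sup>2 * (\<Sum>i<p. (\<sigma> i)^4))"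
  let ?Q = "\<lambda>g k. quad_form n (noise_matrix p \<sigma> g) (net_point n k)"
  have "ennreal (net_exp_sum n p \<sigma> \<theta> g)
      = (\<Sum>k\<in>net_points n. ennreal (exp (\<theta> * ?Q g k)) + ennreal (exp (- \<theta> * ?Q g k)))" for g
    unfolding net_exp_sum_def
    by (subst sum_ennreal[symmetric]) (auto intro!: sum.cong add_nonneg_nonneg less_imp_le)
  then have "(\<integral>\<^sup>+g. ennreal (net_exp_sum n p \<sigma> \<theta> g) \<partial>noise_space n p)
      = (\<Sum>k\<in>net_points n. (\<integral>\<^sup>+g. ennreal (exp (\<theta> * ?Q g k)) + ennreal (exp (- \<theta> * ?Q g k))
           \<partial>noise_space n p))"
    by (simp only:) (rule nn_integral_sum, measurable)
  also have "\<dots> = (\<Sum>k\<in>net_points n. (\<integral>\<^sup>+g. ennreal (exp (\<theta> * ?Q g k)) \<partial>noise_space n p)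
                   + (\<integral>\<^sup>+g. ennreal (exp (- \<theta> * ?Q g k)) \<partial>noise_space n p))"
    by (intro sum.cong refl nn_integral_add) measurable
  also have "\<dots> \<le> (\<Sum>k\<in>net_points n. ennreal B + ennreal B)"
  proof (intro sum_mono add_mono)
    fix k assume k: "k \<in> net_points n"
    have "\<bar>\<theta>\<bar> * (\<sigma> i)\<^sup>2 * 3 \<le> 1/4" "\<bar>- \<theta>\<bar> * (\<sigma> i)\<^sup>2 * 3 \<le> 1/4" if "i < p" for i
      using small[OF that] \<theta> by simp_all
    then show "(\<integral>\<^sup>+g. ennreal (exp (\<theta> * ?Q g k)) \<partial>noise_space n p) \<le> ennreal B"
      and "(\<integral>\<^sup>+g. ennreal (exp (- \<theta> * ?Q g k)) \<partial>noise_space n p) \<le> ennreal B"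
      using nn_integral_exp_quad_form_net_point_le[OF n p k, of \<theta> \<sigma>]
        nn_integral_exp_quad_form_net_point_le[OF n p k, of "- \<theta>" \<sigma>]
      by (simp_all add: B_def)
  qed
  also have "\<dots> = ennreal (\<Sum>k\<in>net_points n. 2 * B)"
    by (subst sum_ennreal[symmetric]) (auto simp: B_def ennreal_plus[symmetric] simp del: ennreal_plus)
  also have "\<dots> \<le> ennreal (2 * (exp (4 * n) * 3 ^ n) * B)"
    using card_net_points_le[of n] by (intro ennreal_leI) (simp add: B_def)
  finally show ?thesis by (simp add: B_def)
qed

text \<open>The tangent bound ln y \<le> ln A + y / A turns the bound A on the expectation of the
  exponential sum into a bound on the expectation of its logarithm.\<close>
lemma nn_integral_ln_net_exp_sum_le:
  assumes n: "1 \<le> n" and p: "1 \<le> p" and \<theta>: "0 < \<theta>"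
    and small: "\<And>i. i < p \<Longrightarrow> \<theta> * (\<sigma> i)\<^sup>2 * 3 \<le> 1/4"
  defines "A \<equiv> 2 * (exp (4 * n) * 3 ^ n) * exp (36 * \<theta>\<^sup>2 * (\<Sum>i<p. (\<sigma> i)^4))"
  shows "(\<integral>\<^sup>+g. ennreal (ln (net_exp_sum n p \<sigma> \<theta> g)) \<partial>noise_space n p) \<le> ennreal (ln A + 1)"
proof -
  interpret P: prob_space "noise_space n p" by (rule prob_space_noise_space)
  have "1 * 1 \<le> exp (4 * real n) * (3::real) ^ n" by (rule mult_mono) auto
  moreover have "1 \<le> exp (36 * \<theta>\<^sup>2 * (\<Sum>i<p. (\<sigma> i)^4))" by (simp add: sum_nonneg)
  ultimately have "1 * 1 \<le> (exp (4 * real n) * 3 ^ n) * exp (36 * \<theta>\<^sup>2 * (\<Sum>i<p. (\<sigma> i)^4))"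
    by (intro mult_mono) auto
  then have A0: "0 < A" and lnA: "0 \<le> ln A" by (auto simp: A_def)
  have "ennreal (ln (net_exp_sum n p \<sigma> \<theta> g))
      \<le> ennreal (ln A) + ennreal (1/A) * ennreal (net_exp_sum n p \<sigma> \<theta> g)" for g
  proof -
    let ?S = "net_exp_sum n p \<sigma> \<theta> g"
    have S: "0 < ?S" using one_le_net_exp_sum[of n p \<sigma> \<theta> g] by simp
    have "ln (?S / A) \<le> ?S / A - 1" using S A0 by (intro ln_le_minus_one) simp
    then have "ln ?S \<le> ln A + (1/A) * ?S" using S A0 by (simp add: ln_div)
    then have "ennreal (ln ?S) \<le> ennreal (ln A + (1/A) * ?S)" by (rule ennreal_leI)
    also have "\<dots> = ennreal (ln A) + ennreal ((1/A) * ?S)"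
      by (rule ennreal_plus) (use lnA A0 S in auto)
    also have "ennreal ((1/A) * ?S) = ennreal (1/A) * ennreal ?S"
      by (rule ennreal_mult) (use A0 S in auto)
    finally show ?thesis .
  qed
  then have "(\<integral>\<^sup>+g. ennreal (ln (net_exp_sum n p \<sigma> \<theta> g)) \<partial>noise_space n p)
      \<le> (\<integral>\<^sup>+g. ennreal (ln A) + ennreal (1/A) * ennreal (net_exp_sum n p \<sigma> \<theta> g) \<partial>noise_space n p)"
    by (intro nn_integral_mono)
  also have "\<dots> = (\<integral>\<^sup>+g. ennreal (ln A) \<partial>noise_space n p)
      + (\<integral>\<^sup>+g. ennreal (1/A) * ennreal (net_exp_sum n p \<sigma> \<theta> g) \<partial>noise_space n p)"
    by (rule nn_integral_add) measurable
  also have "\<dots> = ennreal (ln A)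
      + ennreal (1/A) * (\<integral>\<^sup>+g. ennreal (net_exp_sum n p \<sigma> \<theta> g) \<partial>noise_space n p)"
    by (subst nn_integral_cmult) (simp_all add: P.emeasure_space_1)
  also have "\<dots> \<le> ennreal (ln A) + ennreal (1/A) * ennreal A"
    using nn_integral_net_exp_sum_le[OF n p \<theta> small] unfolding A_def
    by (intro add_left_mono mult_left_mono) auto
  also have "\<dots> = ennreal (ln A + 1)"
    using A0 lnA by (simp add: ennreal_mult[symmetric])
  finally show ?thesis .
qed

lemma nn_integral_noise_along_mean_sq:
  assumes j: "j < n"
  shows "(\<integral>\<^sup>+g. ennreal ((noise_along_mean p \<mu> \<sigma> g j)\<^sup>2) \<partial>noise_space n p)
       = ennreal (\<Sum>i<p. (\<mu> i * \<sigma> i)\<^sup>2)"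
proof -
  let ?J = "(\<lambda>i. (i,j)) ` {..<p}"
  have reindex: "(\<Sum>k\<in>?J. (\<mu> (fst k) * \<sigma> (fst k)) * \<omega> k) = noise_along_mean p \<mu> \<sigma> \<omega> j"
    "(\<Sum>k\<in>?J. (\<mu> (fst k) * \<sigma> (fst k))\<^sup>2) = (\<Sum>i<p. (\<mu> i * \<sigma> i)\<^sup>2)" for \<omega>
    by (subst sum.reindex, simp add: inj_on_def, simp add: noise_along_mean_def)+
  have "?J \<subseteq> {..<p} \<times> {..<n}" using j by auto
  from nn_integral_lin_comb_sq[OF _ this, of "\<lambda>k. \<mu> (fst k) * \<sigma> (fst k)"]
  show ?thesis by (simp add: reindex noise_space_eq)
qed

text \<open>By AM-GM, sqrt Z \<le> b/2 + Z/(2 b), and E Z = n \<Sum>i. (\<mu> i \<sigma> i)^2 \<le> b^2.\<close>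
lemma nn_integral_norm_noise_along_mean_le:
  assumes b: "0 < b" and bb: "real n * (\<Sum>i<p. (\<mu> i * \<sigma> i)\<^sup>2) \<le> b\<^sup>2"
  shows "(\<integral>\<^sup>+g. ennreal (sqrt (sq_norm n (noise_along_mean p \<mu> \<sigma> g))) \<partial>noise_space n p) \<le> ennreal b"
proof -
  interpret P: prob_space "noise_space n p" by (rule prob_space_noise_space)
  let ?z = "\<lambda>g j. (noise_along_mean p \<mu> \<sigma> g j)\<^sup>2"
  have "ennreal (sqrt (sq_norm n (noise_along_mean p \<mu> \<sigma> g)))
      \<le> ennreal (b/2) + ennreal (1/(2*b)) * (\<Sum>j<n. ennreal (?z g j))" for g
  proof -
    define Z where "Z = sq_norm n (noise_along_mean p \<mu> \<sigma> g)"
    have Z0: "0 \<le> Z" by (simp add: Z_def sq_norm_nonneg)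
    have "0 \<le> (sqrt Z - b)\<^sup>2" by simp
    then have "sqrt Z \<le> b/2 + (1/(2*b)) * Z"
      using Z0 b by (simp add: power2_eq_square field_simps)
    then have "ennreal (sqrt Z) \<le> ennreal (b/2) + ennreal (1/(2*b)) * ennreal Z"
      using b Z0 by (simp add: ennreal_leI ennreal_mult[symmetric] ennreal_plus[symmetric]
          del: ennreal_plus)
    moreover have "ennreal Z = (\<Sum>j<n. ennreal (?z g j))"
      unfolding Z_def sq_norm_def by (rule sum_ennreal[symmetric]) simp
    ultimately show ?thesis by (simp add: Z_def)
  qed
  then have "(\<integral>\<^sup>+g. ennreal (sqrt (sq_norm n (noise_along_mean p \<mu> \<sigma> g))) \<partial>noise_space n p)
      \<le> (\<integral>\<^sup>+g. ennreal (b/2) + ennreal (1/(2*b)) * (\<Sum>j<n. ennreal (?z g j)) \<partial>noise_space n p)"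
    by (rule nn_integral_mono)
  also have "\<dots> = ennreal (b/2)
      + ennreal (1/(2*b)) * (\<integral>\<^sup>+g. (\<Sum>j<n. ennreal (?z g j)) \<partial>noise_space n p)"
    by (subst nn_integral_add, measurable, subst nn_integral_cmult, measurable)
       (simp add: P.emeasure_space_1)
  also have "\<dots> = ennreal (b/2)
      + ennreal (1/(2*b)) * (\<Sum>j<n. \<integral>\<^sup>+g. ennreal (?z g j) \<partial>noise_space n p)"
    by (subst nn_integral_sum) measurable
  also have "\<dots> = ennreal (b/2) + ennreal (1/(2*b)) * ennreal (n * (\<Sum>i<p. (\<mu> i * \<sigma> i)\<^sup>2))"
    by (simp add: nn_integral_noise_along_mean_sq ennreal_of_nat_eq_real_of_nat
        ennreal_mult[symmetric] sum_nonneg)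
  also have "\<dots> = ennreal (b/2 + n * (\<Sum>i<p. (\<mu> i * \<sigma> i)\<^sup>2) / (2*b))"
    using b by (simp add: ennreal_plus[symmetric] ennreal_mult[symmetric] sum_nonneg del: ennreal_plus)
  also have "\<dots> \<le> ennreal b"
  proof (rule ennreal_leI)
    have "n * (\<Sum>i<p. (\<mu> i * \<sigma> i)\<^sup>2) / (2*b) \<le> b\<^sup>2 / (2*b)"
      using bb b by (intro divide_right_mono) auto
    also have "b\<^sup>2 / (2*b) = b/2" using b by (simp add: power2_eq_square)
    finally show "b/2 + n * (\<Sum>i<p. (\<mu> i * \<sigma> i)\<^sup>2) / (2*b) \<le> b" by linarith
  qed
  finally show ?thesis .
qed

section \<open>The expected misclassification rate\<close>

lemma miscl_rate_le_net_exp_sum: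
  assumes n: "1 \<le> n" and l: "\<forall>j<n. l j = -1 \<or> l j = 1"
    and v: "unit_leading_eigenvector n (gram p \<mu> l \<sigma> g) v"
    and \<mu>: "0 < (\<Sum>i<p. (\<mu> i)\<^sup>2)" and \<theta>: "0 < \<theta>"
  shows "miscl_rate n l (\<lambda>j. sgn (v j))
     \<le> 8 * sqrt n / (n * (\<Sum>i<p. (\<mu> i)\<^sup>2)) * sqrt (sq_norm n (noise_along_mean p \<mu> \<sigma> g))
       + 24 / (\<theta> * n * (\<Sum>i<p. (\<mu> i)\<^sup>2)) * ln (net_exp_sum n p \<sigma> \<theta> g)"
proof -
  define \<beta> where "\<beta> = ln (net_exp_sum n p \<sigma> \<theta> g) / \<theta>"
  have "\<bar>bilinear_form n (noise_matrix p \<sigma> g) a b\<bar> \<le> 3 * \<beta> * sqrt (sq_norm n a) * sqrt (sq_norm n b)"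
    for a b
    using abs_quad_form_net_point_le[OF _ \<theta>] unfolding \<beta>_def
    by (intro abs_bilinear_form_le_of_net[OF n]) (auto intro: noise_matrix_sym)
  from miscl_rate_le_noise[OF n l v this \<mu>]
  show ?thesis using \<theta> n \<mu> by (simp add: \<beta>_def field_simps)
qed

lemma ln_net_size_bound_le:
  assumes "1 \<le> n"
  shows "ln (2 * (exp (4 * real n) * 3 ^ n) * exp t) + 1 \<le> 8 * n + t"
proof -
  have "ln (2::real) \<le> 1" using ln_le_minus_one[of 2] by simp
  have "ln (3::real) \<le> 2"
    using exp_ge_add_one_self[of 2] ln_le_cancel_iff[of 3 "exp 2"] by simp
  then have "real n * ln 3 \<le> real n * 2" by (intro mult_left_mono) auto
  moreover have "ln (2 * (exp (4 * real n) * 3 ^ n) * exp t) = ln 2 + 4 * n + n * ln 3 + t"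
    by (simp add: ln_mult ln_realpow)
  ultimately show ?thesis using \<open>ln 2 \<le> 1\<close> assms by linarith
qed

lemma nn_integral_noise_terms_le:
  assumes n: "1 \<le> n" and p: "1 \<le> p" and \<theta>: "0 < \<theta>"
    and small: "\<And>i. i < p \<Longrightarrow> \<theta> * (\<sigma> i)\<^sup>2 * 3 \<le> 1/4"
    and b: "0 < b" and bb: "real n * (\<Sum>i<p. (\<mu> i * \<sigma> i)\<^sup>2) \<le> b\<^sup>2"
    and c: "0 \<le> c\<^sub>1" "0 \<le> c\<^sub>2"
  shows "(\<integral>\<^sup>+g. ennreal c\<^sub>1 * ennreal (sqrt (sq_norm n (noise_along_mean p \<mu> \<sigma> g)))
            + ennreal c\<^sub>2 * ennreal (ln (net_exp_sum n p \<sigma> \<theta> g)) \<partial>noise_space n p)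
     \<le> ennreal (c\<^sub>1 * b + c\<^sub>2 * (8 * real n + 36 * \<theta>\<^sup>2 * (\<Sum>i<p. (\<sigma> i)^4)))"
proof -
  define A where "A = 2 * (exp (4 * real n) * 3 ^ n) * exp (36 * \<theta>\<^sup>2 * (\<Sum>i<p. (\<sigma> i)^4))"
  have "(\<lambda>g. sq_norm n (noise_along_mean p \<mu> \<sigma> g)) \<in> borel_measurable (noise_space n p)"
    unfolding sq_norm_def
    by (intro borel_measurable_sum borel_measurable_power borel_measurable_noise_along_mean) simp
  then have "(\<integral>\<^sup>+g. ennreal c\<^sub>1 * ennreal (sqrt (sq_norm n (noise_along_mean p \<mu> \<sigma> g)))
            + ennreal c\<^sub>2 * ennreal (ln (net_exp_sum n p \<sigma> \<theta> g)) \<partial>noise_space n p)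
      = ennreal c\<^sub>1 * (\<integral>\<^sup>+g. ennreal (sqrt (sq_norm n (noise_along_mean p \<mu> \<sigma> g))) \<partial>noise_space n p)
      + ennreal c\<^sub>2 * (\<integral>\<^sup>+g. ennreal (ln (net_exp_sum n p \<sigma> \<theta> g)) \<partial>noise_space n p)"
    by (simp add: nn_integral_add nn_integral_cmult)
  also have "\<dots> \<le> ennreal c\<^sub>1 * ennreal b + ennreal c\<^sub>2 * ennreal (ln A + 1)"
    using nn_integral_norm_noise_along_mean_le[OF b bb] nn_integral_ln_net_exp_sum_le[OF n p \<theta> small]
    by (intro add_mono mult_left_mono) (simp_all add: A_def)
  also have "\<dots> \<le> ennreal c\<^sub>1 * ennreal b
      + ennreal c\<^sub>2 * ennreal (8 * real n + 36 * \<theta>\<^sup>2 * (\<Sum>i<p. (\<sigma> i)^4))"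
    using ln_net_size_bound_le[OF n, of "36 * \<theta>\<^sup>2 * (\<Sum>i<p. (\<sigma> i)^4)"]
    by (intro add_left_mono mult_left_mono ennreal_leI) (simp_all add: A_def)
  also have "\<dots> = ennreal (c\<^sub>1 * b + c\<^sub>2 * (8 * real n + 36 * \<theta>\<^sup>2 * (\<Sum>i<p. (\<sigma> i)^4)))"
    using c b by (simp add: ennreal_mult ennreal_plus sum_nonneg)
  finally show ?thesis .
qed

lemma nn_integral_miscl_rate_le:
  assumes n: "1 \<le> n" and p: "1 \<le> p" and l: "\<forall>j<n. l j = -1 \<or> l j = 1"
    and vhat: "\<forall>g\<in>space (noise_space n p). unit_leading_eigenvector n (gram p \<mu> l \<sigma> g) (vhat g)"
    and \<mu>: "0 < (\<Sum>i<p. (\<mu> i)\<^sup>2)" and \<theta>: "0 < \<theta>"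
    and small: "\<And>i. i < p \<Longrightarrow> \<theta> * (\<sigma> i)\<^sup>2 * 3 \<le> 1/4"
    and b: "0 < b" and bb: "real n * (\<Sum>i<p. (\<mu> i * \<sigma> i)\<^sup>2) \<le> b\<^sup>2"
  shows "(\<integral>\<^sup>+g. ennreal (miscl_rate n l (\<lambda>j. sgn (vhat g j))) \<partial>noise_space n p)
     \<le> ennreal (8 * sqrt n / (n * (\<Sum>i<p. (\<mu> i)\<^sup>2)) * b
         + 24 / (\<theta> * n * (\<Sum>i<p. (\<mu> i)\<^sup>2)) * (8 * real n + 36 * \<theta>\<^sup>2 * (\<Sum>i<p. (\<sigma> i)^4)))"
proof -
  define c\<^sub>1 where "c\<^sub>1 = 8 * sqrt n / (n * (\<Sum>i<p. (\<mu> i)\<^sup>2))"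
  define c\<^sub>2 where "c\<^sub>2 = 24 / (\<theta> * n * (\<Sum>i<p. (\<mu> i)\<^sup>2))"
  have c: "0 \<le> c\<^sub>1" "0 \<le> c\<^sub>2" using \<mu> \<theta> by (simp_all add: c\<^sub>1_def c\<^sub>2_def)
  have "ennreal (miscl_rate n l (\<lambda>j. sgn (vhat g j)))
      \<le> ennreal c\<^sub>1 * ennreal (sqrt (sq_norm n (noise_along_mean p \<mu> \<sigma> g)))
        + ennreal c\<^sub>2 * ennreal (ln (net_exp_sum n p \<sigma> \<theta> g))"
    if "g \<in> space (noise_space n p)" for g
  proof -
    have lnS: "0 \<le> ln (net_exp_sum n p \<sigma> \<theta> g)"
      using one_le_net_exp_sum[of n p \<sigma> \<theta> g] by simp
    have "miscl_rate n l (\<lambda>j. sgn (vhat g j))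
        \<le> c\<^sub>1 * sqrt (sq_norm n (noise_along_mean p \<mu> \<sigma> g)) + c\<^sub>2 * ln (net_exp_sum n p \<sigma> \<theta> g)"
      unfolding c\<^sub>1_def c\<^sub>2_def
      by (rule miscl_rate_le_net_exp_sum[OF n l _ \<mu> \<theta>]) (use vhat that in blast)
    then have "ennreal (miscl_rate n l (\<lambda>j. sgn (vhat g j)))
        \<le> ennreal (c\<^sub>1 * sqrt (sq_norm n (noise_along_mean p \<mu> \<sigma> g)))
          + ennreal (c\<^sub>2 * ln (net_exp_sum n p \<sigma> \<theta> g))"
      using c lnS by (simp add: ennreal_leI sq_norm_nonneg flip: ennreal_plus)
    then show ?thesis using c lnS by (simp add: ennreal_mult sq_norm_nonneg)
  qed
  then have "(\<integral>\<^sup>+g. ennreal (miscl_rate n l (\<lambda>j. sgn (vhat g j))) \<partial>noise_space n p)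
      \<le> (\<integral>\<^sup>+g. ennreal c\<^sub>1 * ennreal (sqrt (sq_norm n (noise_along_mean p \<mu> \<sigma> g)))
            + ennreal c\<^sub>2 * ennreal (ln (net_exp_sum n p \<sigma> \<theta> g)) \<partial>noise_space n p)"
    by (rule nn_integral_mono)
  also have "\<dots> \<le> ennreal (c\<^sub>1 * b + c\<^sub>2 * (8 * real n + 36 * \<theta>\<^sup>2 * (\<Sum>i<p. (\<sigma> i)^4)))"
    by (rule nn_integral_noise_terms_le[OF n p \<theta> small b bb c])
  finally show ?thesis by (simp add: c\<^sub>1_def c\<^sub>2_def)
qed

text \<open>The choice \<theta> = min (1 / (12 s^2)) (sqrt n / sqrt T) satisfies the constraint of the moment
  generating function bound and balances the two terms n / \<theta> and \<theta> T of the union bound.\<close>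
lemma parameter_choice_bound:
  fixes n N s T \<theta> :: real
  assumes n: "1 \<le> n" and N: "0 < N" and s: "0 < s" and T: "s ^ 4 \<le> T"
    and \<theta>: "\<theta> = min (1 / (12 * s\<^sup>2)) (sqrt n / sqrt T)"
  shows "8 * sqrt n / (n * N) * (sqrt n * s * sqrt N) + 24 / (\<theta> * n * N) * (8 * n + 36 * \<theta>\<^sup>2 * T)
       \<le> 2304 * ((n * sqrt N * s + n * s\<^sup>2 + sqrt n * sqrt T) / (n * (sqrt N)\<^sup>2))"
proof -
  have T0: "0 < T" using T s by (meson less_le_trans zero_less_power)
  have sn: "0 < sqrt n" and sT: "0 < sqrt T" using n T0 by auto
  have \<theta>0: "0 < \<theta>" using s sn sT by (simp add: \<theta>)
  have inv: "n * (1 / \<theta>) \<le> 12 * (n * s\<^sup>2) + sqrt n * sqrt T"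
  proof (cases "1 / (12 * s\<^sup>2) \<le> sqrt n / sqrt T")
    case True
    then show ?thesis using sn sT by (simp add: \<theta>)
  next
    case False
    then have "n * (1 / \<theta>) = sqrt n * sqrt T"
      using sn sT n by (simp add: \<theta> field_simps flip: real_sqrt_mult) (simp add: real_sqrt_mult)
    then show ?thesis using s n by simp
  qed
  have "\<theta> * T \<le> sqrt n / sqrt T * T" using T0 by (intro mult_right_mono) (auto simp: \<theta>)
  also have "\<dots> = sqrt n * sqrt T"
    using T0 by (metis real_div_sqrt less_eq_real_def times_divide_eq_left mult.commute)
  finally have \<theta>T: "\<theta> * T \<le> sqrt n * sqrt T" .
  have "8 * sqrt n / (n * N) * (sqrt n * s * sqrt N) + 24 / (\<theta> * n * N) * (8 * n + 36 * \<theta>\<^sup>2 * T)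
      = (8 * (n * sqrt N * s) + (192 * (n * (1 / \<theta>)) + 864 * (\<theta> * T))) / (n * N)"
    using \<theta>0 n N by (simp add: field_simps power2_eq_square)
  also have "\<dots> \<le> 2304 * (n * sqrt N * s + n * s\<^sup>2 + sqrt n * sqrt T) / (n * N)"
  proof (rule divide_right_mono)
    have lin: "8 * X + (192 * Q + 864 * R) \<le> 2304 * (X + W + Y)"
      if "0 \<le> X" "0 \<le> Y" "Q \<le> 12 * W + Y" "R \<le> Y" for X W Y Q R :: real
      using that by (simp add: algebra_simps)
    have "0 \<le> n * sqrt N * s" "0 \<le> sqrt n * sqrt T" using n N s sn sT by simp_all
    then show "8 * (n * sqrt N * s) + (192 * (n * (1 / \<theta>)) + 864 * (\<theta> * T))
        \<le> 2304 * (n * sqrt N * s + n * s\<^sup>2 + sqrt n * sqrt T)"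
      using inv \<theta>T by (rule lin)
  qed (use n N in simp)
  also have "\<dots> = 2304 * ((n * sqrt N * s + n * s\<^sup>2 + sqrt n * sqrt T) / (n * (sqrt N)\<^sup>2))"
    using N by simp
  finally show ?thesis .
qed

lemma sigma_star_ge: "i < p \<Longrightarrow> \<sigma> i \<le> sigma_star p \<sigma>"
  unfolding sigma_star_def by (intro Max_ge) auto

lemma sigma_star_nonneg: "0 \<le> sigma_star p \<sigma>"
  unfolding sigma_star_def by (intro Max_ge) auto

lemma sigma_star_attained:
  assumes "0 < sigma_star p \<sigma>"
  obtains i where "i < p" "\<sigma> i = sigma_star p \<sigma>"
proof -
  have "sigma_star p \<sigma> \<in> insert 0 (\<sigma> ` {..<p})" unfolding sigma_star_def by (intro Max_in) auto
  then show ?thesis using assms that by auto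
qed

lemma sq_le_sigma_star_sq: "0 \<le> \<sigma> i \<Longrightarrow> i < p \<Longrightarrow> (\<sigma> i)\<^sup>2 \<le> (sigma_star p \<sigma>)\<^sup>2"
  using sigma_star_ge[of i p \<sigma>] by (simp add: power_mono)

lemma sigma_star_pow4_le: "(sigma_star p \<sigma>)^4 \<le> (\<Sum>i<p. (\<sigma> i)^4)"
proof (cases "0 < sigma_star p \<sigma>")
  case True
  then obtain i where "i < p" "\<sigma> i = sigma_star p \<sigma>" by (rule sigma_star_attained)
  then show ?thesis using member_le_sum[of i "{..<p}" "\<lambda>i. (\<sigma> i)^4"] by simp
next
  case False
  then show ?thesis using sigma_star_nonneg[of p \<sigma>] by (simp add: sum_nonneg)
qed

lemma sum_mult_sq_le:
  fixes \<mu> \<sigma> :: "nat \<Rightarrow> real"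
  assumes "\<And>i. i < p \<Longrightarrow> (\<sigma> i)\<^sup>2 \<le> s\<^sup>2"
  shows "(\<Sum>i<p. (\<mu> i * \<sigma> i)\<^sup>2) \<le> s\<^sup>2 * (\<Sum>i<p. (\<mu> i)\<^sup>2)"
  unfolding sum_distrib_left
proof (rule sum_mono)
  fix i assume "i \<in> {..<p}"
  then show "(\<mu> i * \<sigma> i)\<^sup>2 \<le> s\<^sup>2 * (\<mu> i)\<^sup>2"
    using mult_left_mono[OF assms, of i "(\<mu> i)\<^sup>2"] by (simp add: power_mult_distrib mult.commute)
qed

lemma sigma_tilde_sq: "(sigma_tilde p \<sigma>)\<^sup>2 = sqrt (\<Sum>i<p. (\<sigma> i)^4)"
proof -
  have "0 \<le> (\<Sum>i<p. (\<sigma> i)^4)" by (simp add: sum_nonneg)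
  then have "((root 4 (\<Sum>i<p. (\<sigma> i)^4))\<^sup>2)\<^sup>2 = (\<Sum>i<p. (\<sigma> i)^4)"
    using real_root_pow_pos2[of 4] by (simp flip: power_mult)
  then show ?thesis unfolding sigma_tilde_def by (intro real_sqrt_unique[symmetric]) auto
qed

lemma miscl_rate_nonneg: "0 \<le> miscl_rate n l lh"
  unfolding miscl_rate_def by simp

lemma miscl_rate_le_one: "miscl_rate n l lh \<le> 1"
proof (cases "n = 0")
  case False
  have "card {j\<in>{..<n}. l j \<noteq> lh j} \<le> card {..<n}" by (rule card_mono) auto
  then show ?thesis using False unfolding miscl_rate_def by (simp add: divide_le_eq min_le_iff_disj)
qed (simp add: miscl_rate_def)

lemma miscl_rate_noiseless:
  assumes n: "1 \<le> n" and l: "\<forall>j<n. l j = -1 \<or> l j = 1" and \<sigma>: "\<forall>i<p. \<sigma> i = 0"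
    and v: "unit_leading_eigenvector n (gram p \<mu> l \<sigma> g) v"
    and \<mu>: "0 < (\<Sum>i<p. (\<mu> i)\<^sup>2)"
  shows "miscl_rate n l (\<lambda>j. sgn (v j)) = 0"
proof -
  have sum0: "(\<Sum>i<p. f i) = 0" if "\<And>i. i < p \<Longrightarrow> f i = 0" for f :: "nat \<Rightarrow> real"
    by (rule sum.neutral) (use that in auto)
  have \<sigma>0: "\<And>i. i < p \<Longrightarrow> \<sigma> i = 0" using \<sigma> by blast
  have "noise_matrix p \<sigma> g j k = 0" for j k
    unfolding noise_matrix_def
    using sum0[of "\<lambda>i. (\<sigma> i)\<^sup>2"] sum0[of "\<lambda>i. (\<sigma> i)\<^sup>2 * g (i,j) * g (i,k)"] \<sigma>0 by simp
  then have "bilinear_form n (noise_matrix p \<sigma> g) a b = 0" for a b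
    by (simp add: bilinear_form_def)
  moreover have "sq_norm n (noise_along_mean p \<mu> \<sigma> g) = 0"
    by (simp add: sq_norm_def noise_along_mean_def sum0 \<sigma>0)
  ultimately have "miscl_rate n l (\<lambda>j. sgn (v j)) \<le> 0"
    using miscl_rate_le_noise[OF n l v _ \<mu>, of 0] by simp
  then show ?thesis using miscl_rate_nonneg by (simp add: order_antisym)
qed

lemma nn_integral_miscl_rate_le_error_bound:
  assumes n: "1 \<le> n" and l: "\<forall>j<n. l j = -1 \<or> l j = 1" and \<sigma>: "\<forall>i<p. 0 \<le> \<sigma> i"
    and vhat: "\<forall>g\<in>space (noise_space n p). unit_leading_eigenvector n (gram p \<mu> l \<sigma> g) (vhat g)"
    and \<mu>: "norm2 p \<mu> \<noteq> 0"
  shows "(\<integral>\<^sup>+g. ennreal (miscl_rate n l (\<lambda>j. sgn (vhat g j))) \<partial>noise_space n p)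
     \<le> ennreal (2304 * ((real n * norm2 p \<mu> * sigma_star p \<sigma> + real n * (sigma_star p \<sigma>)\<^sup>2
            + sqrt (real n) * (sigma_tilde p \<sigma>)\<^sup>2) / (real n * (norm2 p \<mu>)\<^sup>2)))"
proof -
  define N where "N = (\<Sum>i<p. (\<mu> i)\<^sup>2)"
  define s where "s = sigma_star p \<sigma>"
  define T where "T = (\<Sum>i<p. (\<sigma> i)^4)"
  have N: "0 < N" using \<mu> by (simp add: N_def norm2_def less_le sum_nonneg)
  then have p: "1 \<le> p" by (cases p) (auto simp: N_def)
  have \<sigma>s: "(\<sigma> i)\<^sup>2 \<le> s\<^sup>2" if "i < p" for i
    using sq_le_sigma_star_sq[OF _ that] \<sigma> that by (simp add: s_def)
  show ?thesis
  proof (cases "s = 0")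
    case True
    then have "\<forall>i<p. \<sigma> i = 0" using \<sigma>s by simp
    then have "(\<integral>\<^sup>+g. ennreal (miscl_rate n l (\<lambda>j. sgn (vhat g j))) \<partial>noise_space n p)
        = (\<integral>\<^sup>+g. 0 \<partial>noise_space n p)"
      using miscl_rate_noiseless[OF n l _ _ N[unfolded N_def]] vhat by (intro nn_integral_cong) auto
    then show ?thesis by simp
  next
    case False
    then have s: "0 < s" using sigma_star_nonneg[of p \<sigma>] by (simp add: s_def)
    have T: "s ^ 4 \<le> T" unfolding s_def T_def by (rule sigma_star_pow4_le)
    define \<theta> where "\<theta> = min (1 / (12 * s\<^sup>2)) (sqrt n / sqrt T)"
    have "0 < T" using T s by (meson less_le_trans zero_less_power)
    then have \<theta>0: "0 < \<theta>" using s n by (simp add: \<theta>_def)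
    have small: "\<theta> * (\<sigma> i)\<^sup>2 * 3 \<le> 1/4" if "i < p" for i
    proof -
      have "\<theta> * (\<sigma> i)\<^sup>2 \<le> 1 / (12 * s\<^sup>2) * s\<^sup>2"
        using \<theta>0 \<sigma>s[OF that] by (intro mult_mono) (auto simp: \<theta>_def)
      then show ?thesis using s by simp
    qed
    have "real n * (\<Sum>i<p. (\<mu> i * \<sigma> i)\<^sup>2) \<le> real n * (s\<^sup>2 * N)"
      unfolding N_def using sum_mult_sq_le[OF \<sigma>s] by (intro mult_left_mono) auto
    also have "\<dots> = (sqrt n * s * sqrt N)\<^sup>2"
      using N by (simp add: power_mult_distrib)
    finally have bb: "real n * (\<Sum>i<p. (\<mu> i * \<sigma> i)\<^sup>2) \<le> (sqrt n * s * sqrt N)\<^sup>2" .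
    have b: "0 < sqrt n * s * sqrt N" using n s N by simp
    have "(\<integral>\<^sup>+g. ennreal (miscl_rate n l (\<lambda>j. sgn (vhat g j))) \<partial>noise_space n p)
        \<le> ennreal (8 * sqrt n / (n * N) * (sqrt n * s * sqrt N)
            + 24 / (\<theta> * n * N) * (8 * real n + 36 * \<theta>\<^sup>2 * T))"
      unfolding N_def T_def
      by (rule nn_integral_miscl_rate_le[OF n p l vhat N[unfolded N_def] \<theta>0 _ b[unfolded N_def]
          bb[unfolded N_def]]) (fact small)
    also have "\<dots> \<le> ennreal (2304 * ((n * sqrt N * s + n * s\<^sup>2 + sqrt n * sqrt T) / (n * (sqrt N)\<^sup>2)))"
      by (rule ennreal_leI, rule parameter_choice_bound[OF _ N s T \<theta>_def]) (use n in simp)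
    finally show ?thesis unfolding norm2_def sigma_tilde_sq N_def[symmetric] s_def[symmetric]
      T_def[symmetric] .
  qed
qed

lemma integral_le_of_nn_integral_le:
  assumes "\<And>x. 0 \<le> f x" and "(\<integral>\<^sup>+x. ennreal (f x) \<partial>M) \<le> ennreal B" and "0 \<le> B"
  shows "(\<integral>x. f x \<partial>M) \<le> B"
proof (cases "integrable M f")
  case True
  then have "ennreal (\<integral>x. f x \<partial>M) \<le> ennreal B"
    using assms by (simp add: nn_integral_eq_integral)
  then show ?thesis using assms(3) by (simp add: ennreal_le_iff)
qed (simp add: not_integrable_integral_eq assms(3))

theorem theorem4p1:
  shows "\<exists>C>0. \<forall>(n::nat) (p::nat) (\<mu>::nat \<Rightarrow> real) (l::nat \<Rightarrow> real) (\<sigma>::nat \<Rightarrow> real)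
            (vhat::(nat \<times> nat \<Rightarrow> real) \<Rightarrow> nat \<Rightarrow> real).
     n \<ge> 1 \<and> (\<forall>j<n. l j = -1 \<or> l j = 1) \<and> (\<forall>i<p. \<sigma> i \<ge> 0) \<and>
     (\<forall>g\<in>space (noise_space n p). unit_leading_eigenvector n (gram p \<mu> l \<sigma> g) (vhat g)) \<and>
     (\<forall>j<n. (\<lambda>g. vhat g j) \<in> borel_measurable (noise_space n p))
     \<longrightarrow> (\<integral>g. miscl_rate n l (\<lambda>j. sgn (vhat g j)) \<partial>(noise_space n p)) \<le> C * error_bound n p \<mu> \<sigma>"
proof (intro exI[of _ "2304::real"] conjI allI impI)
  fix n p :: nat and \<mu> l \<sigma> :: "nat \<Rightarrow> real" and vhat :: "(nat \<times> nat \<Rightarrow> real) \<Rightarrow> nat \<Rightarrow> real"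
  assume "n \<ge> 1 \<and> (\<forall>j<n. l j = -1 \<or> l j = 1) \<and> (\<forall>i<p. \<sigma> i \<ge> 0) \<and>
     (\<forall>g\<in>space (noise_space n p). unit_leading_eigenvector n (gram p \<mu> l \<sigma> g) (vhat g)) \<and>
     (\<forall>j<n. (\<lambda>g. vhat g j) \<in> borel_measurable (noise_space n p))"
  then have n: "1 \<le> n" and l: "\<forall>j<n. l j = -1 \<or> l j = 1" and \<sigma>: "\<forall>i<p. 0 \<le> \<sigma> i"
    and vhat: "\<forall>g\<in>space (noise_space n p). unit_leading_eigenvector n (gram p \<mu> l \<sigma> g) (vhat g)"
    by auto
  interpret P: prob_space "noise_space n p" by (rule prob_space_noise_space)
  let ?E = "\<integral>g. miscl_rate n l (\<lambda>j. sgn (vhat g j)) \<partial>noise_space n p"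
  have "(\<integral>\<^sup>+g. ennreal (miscl_rate n l (\<lambda>j. sgn (vhat g j))) \<partial>noise_space n p) \<le> ennreal 1"
    using nn_integral_mono[of "noise_space n p" _ "\<lambda>_. ennreal 1"] miscl_rate_le_one
    by (simp add: ennreal_leI P.emeasure_space_1)
  then have E1: "?E \<le> 1" by (rule integral_le_of_nn_integral_le[OF miscl_rate_nonneg]) simp
  show "?E \<le> 2304 * error_bound n p \<mu> \<sigma>"
  proof (cases "norm2 p \<mu> = 0")
    case False
    have "?E \<le> 2304 * ((real n * norm2 p \<mu> * sigma_star p \<sigma> + real n * (sigma_star p \<sigma>)\<^sup>2
            + sqrt (real n) * (sigma_tilde p \<sigma>)\<^sup>2) / (real n * (norm2 p \<mu>)\<^sup>2))"
      using nn_integral_miscl_rate_le_error_bound[OF n l \<sigma> vhat False]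
      by (rule integral_le_of_nn_integral_le[OF miscl_rate_nonneg])
         (intro mult_nonneg_nonneg divide_nonneg_nonneg add_nonneg_nonneg;
          simp add: norm2_def sigma_star_nonneg sum_nonneg)
    then show ?thesis using E1 False by (simp add: error_bound_def min_def)
  qed (use E1 in \<open>simp add: error_bound_def\<close>)
qed (simp)

end
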